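(* Assume all internal energies $I_v$ are equal and that binary reactions $v,w\to v',w'$ occur at rates depending only on the types (not on energies), so that the type counts $(n_1,\dots,n_V)$, $\sum_vn_v=M$, evolve as an autonomous Markov chain. Let $\rho_1,\dots,\rho_V$ be probability densities on $\mathbb{R}_+$ such that for every possible reaction $v,w\to v',w'$, $$\rho_{vw}(T):=\int_0^T\rho_v(x)\rho_w(T-x)\,dx=\int_0^T\rho_{v'}(x)\rho_{w'}(T-x)\,dx=\rho_{v'w'}(T)\quad\text{for all }T\ge0,$$ and assume that in each reaction $v,w\to v',w'$ of two molecules with total energy $T$ the new energies are drawn from the canonical kernel $P_{\rho_{v'}\rho_{w'}}(\cdot,\cdot|T)$. Let $p(n_1,\dots,n_V)$ be a stationary distribution of the type-count chain (e.g. the limit of $p_t(n_1,\dots,n_V)$ as $t\to\infty$, assumed to exist). Then the measure on $\mathcal{L}^M$ under which the type counts have law $p$ and, conditionally on them, the energies of all molecules are independent with a type-$v$ molecule having density $\rho_v$, is invariant.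
   Context: $\mathcal{L}^M$ is the Markov process of $M$ molecules each described by a type $v\in\{1,\dots,V\}$ and kinetic energy in $\mathbb{R}_+$; in a binary reaction the total kinetic energy of the two reacting molecules is conserved (internal energies being equal). For types $v',w'$ with independent random variables $\xi_{v'},\xi_{w'}$ of densities $\rho_{v'},\rho_{w'}$, the canonical kernel is the conditional law $P_{\rho_{v'}\rho_{w'}}(x,y|T)=P(\xi_{v'}=x,\xi_{w'}=y\,|\,\xi_{v'}+\xi_{w'}=T)$. *)

theory Defs
  imports "HOL-Probability.Probability"
begin

text \<open>A state of the labelled M-molecule system: molecule i (i < M) has a type and
  a kinetic energy.\<close>
type_synonym 'v state = "nat \<Rightarrow> 'v \<times> real"

definition state_space :: "nat \<Rightarrow> ('v state) measure" where
  "state_space M = PiM {..<M} (\<lambda>_. count_space UNIV \<Otimes>\<^sub>M lborel)"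

definition conv :: "('v \<Rightarrow> real \<Rightarrow> real) \<Rightarrow> 'v \<Rightarrow> 'v \<Rightarrow> real \<Rightarrow> ennreal" where
  "conv \<rho> v w T = (\<integral>\<^sup>+ x. ennreal (indicator {0..T} x * \<rho> v x * \<rho> w (T - x)) \<partial>lborel)"

text \<open>Canonical kernel: conditional law of (xi_v, xi_w) given xi_v + xi_w = T.
  Where the conditional density is undefined (conv = 0 or infinity, a null set of T)
  an arbitrary convention (point mass at (T/2, T/2)) is used.\<close>
definition canon_kernel :: "('v \<Rightarrow> real \<Rightarrow> real) \<Rightarrow> 'v \<Rightarrow> 'v \<Rightarrow> real \<Rightarrow> (real \<times> real) measure" where
  "canon_kernel \<rho> v w T =
     (if 0 < conv \<rho> v w T \<and> conv \<rho> v w T < \<infinity>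
      then distr (density lborel (\<lambda>x. ennreal (indicator {0..T} x * \<rho> v x * \<rho> w (T - x)) / conv \<rho> v w T))
                 (lborel \<Otimes>\<^sub>M lborel) (\<lambda>x. (x, T - x))
      else return (lborel \<Otimes>\<^sub>M lborel) (T / 2, T / 2))"

definition cnt :: "nat \<Rightarrow> (nat \<Rightarrow> 'v) \<Rightarrow> 'v \<Rightarrow> nat" where
  "cnt M \<tau> v = card {i. i < M \<and> \<tau> i = v}"

definition count_states :: "nat \<Rightarrow> ('v::finite \<Rightarrow> nat) set" where
  "count_states M = {n. (\<Sum>v\<in>UNIV. n v) = M}"

text \<open>Number of ordered pairs of distinct molecules with types (v,w).\<close>
definition npairs :: "('v \<Rightarrow> nat) \<Rightarrow> 'v \<Rightarrow> 'v \<Rightarrow> nat" where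
  "npairs n v w = (if v = w then n v * (n v - 1) else n v * n w)"

definition move :: "('v \<Rightarrow> nat) \<Rightarrow> 'v \<Rightarrow> 'v \<Rightarrow> 'v \<Rightarrow> 'v \<Rightarrow> ('v \<Rightarrow> nat)" where
  "move n v w v' w' =
     (let n1 = n(v := n v - 1); n2 = n1(w := n1 w - 1); n3 = n2(v' := n2 v' + 1)
      in n3(w' := n3 w' + 1))"

text \<open>Transition rates of the (autonomous) type-count chain; r v w v' w' is the rate at
  which an ordered pair of distinct molecules of types (v,w) reacts into types (v',w').\<close>
definition count_rate :: "('v::finite \<Rightarrow> 'v \<Rightarrow> 'v \<Rightarrow> 'v \<Rightarrow> real) \<Rightarrow> ('v \<Rightarrow> nat) \<Rightarrow> ('v \<Rightarrow> nat) \<Rightarrow> real" where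
  "count_rate r n n' =
     (\<Sum>v\<in>UNIV. \<Sum>w\<in>UNIV. \<Sum>v'\<in>UNIV. \<Sum>w'\<in>UNIV.
        if move n v w v' w' = n' then real (npairs n v w) * r v w v' w' else 0)"

definition stationary_counts :: "('v::finite \<Rightarrow> 'v \<Rightarrow> 'v \<Rightarrow> 'v \<Rightarrow> real) \<Rightarrow> nat \<Rightarrow> (('v \<Rightarrow> nat) \<Rightarrow> real) \<Rightarrow> bool" where
  "stationary_counts r M p \<longleftrightarrow>
     (\<forall>n. 0 \<le> p n) \<and> (\<forall>n. n \<notin> count_states M \<longrightarrow> p n = 0) \<and>
     (\<Sum>n\<in>count_states M. p n) = 1 \<and>
     (\<forall>n\<in>count_states M.
        (\<Sum>n'\<in>count_states M. p n' * count_rate r n' n) = p n * (\<Sum>n'\<in>count_states M. count_rate r n n'))"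

text \<open>The candidate measure: counts have law p, labelled types are uniform given the
  counts (exchangeable), and given the types the energies are independent with densities rho.\<close>
definition inv_measure :: "nat \<Rightarrow> ('v::finite \<Rightarrow> real \<Rightarrow> real) \<Rightarrow> (('v \<Rightarrow> nat) \<Rightarrow> real) \<Rightarrow> ('v state) measure" where
  "inv_measure M \<rho> p = density (state_space M)
     (\<lambda>c. ennreal (p (cnt M (\<lambda>i. fst (c i))) * (\<Prod>v\<in>UNIV. fact (cnt M (\<lambda>i. fst (c i)) v)) / fact M
                   * (\<Prod>i<M. \<rho> (fst (c i)) (snd (c i)))))"

definition out_rate :: "('v::finite \<Rightarrow> 'v \<Rightarrow> 'v \<Rightarrow> 'v \<Rightarrow> real) \<Rightarrow> nat \<Rightarrow> 'v state \<Rightarrow> real" where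
  "out_rate r M c = (\<Sum>i<M. \<Sum>j\<in>{..<M} - {i}. \<Sum>v'\<in>UNIV. \<Sum>w'\<in>UNIV. r (fst (c i)) (fst (c j)) v' w')"

definition jump_rate :: "('v::finite \<Rightarrow> 'v \<Rightarrow> 'v \<Rightarrow> 'v \<Rightarrow> real) \<Rightarrow> ('v \<Rightarrow> real \<Rightarrow> real) \<Rightarrow> nat
    \<Rightarrow> 'v state \<Rightarrow> 'v state set \<Rightarrow> ennreal" where
  "jump_rate r \<rho> M c A =
     (\<Sum>i<M. \<Sum>j\<in>{..<M} - {i}. \<Sum>v'\<in>UNIV. \<Sum>w'\<in>UNIV.
        ennreal (r (fst (c i)) (fst (c j)) v' w') *
        emeasure (canon_kernel \<rho> v' w' (snd (c i) + snd (c j)))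
          {xy \<in> space (lborel \<Otimes>\<^sub>M lborel). c(i := (v', fst xy), j := (w', snd xy)) \<in> A})"

text \<open>Invariance of a measure for the bounded-rate jump process (global balance mu Q = 0).\<close>
definition invariant :: "('v::finite \<Rightarrow> 'v \<Rightarrow> 'v \<Rightarrow> 'v \<Rightarrow> real) \<Rightarrow> ('v \<Rightarrow> real \<Rightarrow> real) \<Rightarrow> nat
    \<Rightarrow> ('v state) measure \<Rightarrow> bool" where
  "invariant r \<rho> M \<mu> \<longleftrightarrow> sets \<mu> = sets (state_space M) \<and>
     (\<forall>A\<in>sets (state_space M).
        (\<integral>\<^sup>+ c. jump_rate r \<rho> M c A \<partial>\<mu>) = (\<integral>\<^sup>+ c. ennreal (out_rate r M c) * indicator A c \<partial>\<mu>))"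

end

theory Submission
  imports Defs
begin

(* The candidate measure factorises into the law of the labelled types, which given the counts
   is uniform over the labellings, and the product of the densities of the energies given the
   types.  To check global balance on a set A, split the flow into A by the reacting pair of
   molecules and integrate out their energies: since reactants and products give their total
   energy the same density, the canonical kernel carries the product density of the reactants'
   energies to that of the products', so the energies factor out.  What remains is balance for
   the labelled types.  It follows from stationarity of p for the count chain: after reversing
   each reaction, the factorial weights of the uniform labelling turn the numbers of reacting
   pairs of labelled molecules into the rates of the count chain. *)

subsection \<open>Type counts\<close>

lemma int_cnt_fun_upd:
  assumes "i < M"
  shows "int (cnt M (t(i := v)) u) = int (cnt M t u) - of_bool (t i = u) + of_bool (v = u)"
proof -
  let ?S = "{k. k < M \<and> k \<noteq> i \<and> t k = u}"
  have old: "{k. k < M \<and> t k = u} = ?S \<union> (if t i = u then {i} else {})"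
    and new: "{k. k < M \<and> (t(i := v)) k = u} = ?S \<union> (if v = u then {i} else {})"
    using assms by auto
  have "cnt M t u = card ?S + of_bool (t i = u)"
    unfolding cnt_def old by (auto simp: card_insert_if)
  moreover have "cnt M (t(i := v)) u = card ?S + of_bool (v = u)"
    unfolding cnt_def new by (auto simp: card_insert_if)
  ultimately show ?thesis by simp
qed

lemma cnt_Suc: "cnt (Suc M) t u = cnt M t u + of_bool (t M = u)"
proof -
  have "{k. k < Suc M \<and> t k = u} = {k. k < M \<and> t k = u} \<union> (if t M = u then {M} else {})"
    by (auto simp: less_Suc_eq)
  then show ?thesis unfolding cnt_def by (auto simp: card_insert_if)
qed

lemma sum_cnt: "(\<Sum>u\<in>(UNIV :: 'v::finite set). cnt M t u) = M"
proof (induction M)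
  case 0
  then show ?case by (simp add: cnt_def)
next
  case (Suc M)
  have "(\<Sum>u\<in>(UNIV :: 'v set). cnt (Suc M) t u) = (\<Sum>u\<in>UNIV. cnt M t u) + (\<Sum>u\<in>UNIV. of_bool (t M = u))"
    by (simp add: cnt_Suc sum.distrib)
  then show ?case using Suc by (simp add: sum.delta)
qed

lemma cnt_in_count_states: "cnt M t \<in> count_states M"
  by (simp add: count_states_def sum_cnt)

lemma finite_count_states: "finite (count_states M :: ('v::finite \<Rightarrow> nat) set)"
proof (rule finite_subset)
  let ?B = "{n :: 'v \<Rightarrow> nat. \<forall>v. (v \<in> UNIV \<longrightarrow> n v \<in> {..M}) \<and> (v \<notin> UNIV \<longrightarrow> n v = 0)}"
  show "count_states M \<subseteq> ?B"
  proof
    fix n :: "'v \<Rightarrow> nat"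
    assume "n \<in> count_states M"
    then show "n \<in> ?B"
      using member_le_sum[of _ UNIV n] by (simp add: count_states_def)
  qed
  show "finite ?B" by (rule finite_set_of_finite_funs) auto
qed

lemma npairs_pos_iff: "0 < npairs n v w \<longleftrightarrow> (if v = w then 2 \<le> n v else 1 \<le> n v \<and> 1 \<le> n w)"
  by (auto simp: npairs_def)

lemma int_move:
  assumes "0 < npairs n v w"
  shows "int (move n v w v' w' u) = int (n u) - of_bool (v = u) - of_bool (w = u) + of_bool (v' = u) + of_bool (w' = u)"
  using assms unfolding npairs_pos_iff move_def Let_def
  by (cases "v = w") (auto split: if_splits)

lemma npairs_cnt_pos:
  assumes "i < M" "j < M" "i \<noteq> j"
  shows "0 < npairs (cnt M t) (t i) (t j)"
proof -
  have "{i, j} \<subseteq> {k. k < M \<and> t k = t i}" if "t i = t j" using assms that by auto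
  then have "t i = t j \<Longrightarrow> 2 \<le> cnt M t (t i)" unfolding cnt_def using assms
    by (metis (no_types, lifting) card_2_iff card_mono finite_nat_set_iff_bounded mem_Collect_eq)
  moreover have "i \<in> {k. k < M \<and> t k = t i}" "j \<in> {k. k < M \<and> t k = t j}" using assms by auto
  then have "1 \<le> cnt M t (t i)" "1 \<le> cnt M t (t j)" unfolding cnt_def
    by (metis (no_types, lifting) One_nat_def Suc_leI card_gt_0_iff empty_iff finite_nat_set_iff_bounded mem_Collect_eq)+
  ultimately show ?thesis unfolding npairs_pos_iff by auto
qed

lemma cnt_fun_upd_pair:
  assumes "i < M" "j < M" "i \<noteq> j"
  shows "cnt M (t(i := v, j := w)) = move (cnt M t) (t i) (t j) v w"
proof
  fix u
  have "int (cnt M (t(i := v, j := w)) u) = int (cnt M (t(i := v)) u) - of_bool ((t(i := v)) j = u) + of_bool (w = u)"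
    using int_cnt_fun_upd[OF assms(2), of "t(i := v)" w u] by simp
  also have "\<dots> = int (move (cnt M t) (t i) (t j) v w u)"
    using int_cnt_fun_upd[OF assms(1), of t v u] assms(3) int_move[OF npairs_cnt_pos[OF assms, of t]] by simp
  finally show "cnt M (t(i := v, j := w)) u = move (cnt M t) (t i) (t j) v w u" by simp
qed

lemma card_distinct_pairs_of_types:
  "card {x \<in> Sigma {..<M} (\<lambda>i. {..<M} - {i}). t (fst x) = a \<and> t (snd x) = b} = npairs (cnt M t) a b"
proof -
  let ?A = "{k. k < M \<and> t k = a}" and ?B = "{k. k < M \<and> t k = b}"
  show ?thesis
  proof (cases "a = b")
    case True
    have eq: "{x \<in> Sigma {..<M} (\<lambda>i. {..<M} - {i}). t (fst x) = a \<and> t (snd x) = b}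
       = ?A \<times> ?A - (\<lambda>k. (k, k)) ` ?A" using True by auto
    have "card ((\<lambda>k. (k, k)) ` ?A) = card ?A" by (rule card_image) (auto simp: inj_on_def)
    then have "card (?A \<times> ?A - (\<lambda>k. (k, k)) ` ?A) = card ?A * card ?A - card ?A"
      by (subst card_Diff_subset) (auto simp: card_cartesian_product)
    then show ?thesis unfolding eq using True by (simp add: npairs_def cnt_def diff_mult_distrib2)
  next
    case False
    then have "{x \<in> Sigma {..<M} (\<lambda>i. {..<M} - {i}). t (fst x) = a \<and> t (snd x) = b} = ?A \<times> ?B"
      by auto
    then show ?thesis using False by (simp add: npairs_def cnt_def card_cartesian_product)
  qed
qed

lemma sum_distinct_pairs_by_types:
  fixes h :: "'v::finite \<Rightarrow> 'v \<Rightarrow> real"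
  shows "(\<Sum>i<M. \<Sum>j\<in>{..<M} - {i}. h (t i) (t j)) = (\<Sum>a\<in>UNIV. \<Sum>b\<in>UNIV. real (npairs (cnt M t) a b) * h a b)"
proof -
  let ?D = "Sigma {..<M} (\<lambda>i. {..<M} - {i})"
  let ?g = "\<lambda>x. (t (fst x), t (snd x))"
  have "(\<Sum>i<M. \<Sum>j\<in>{..<M} - {i}. h (t i) (t j)) = (\<Sum>x\<in>?D. h (t (fst x)) (t (snd x)))"
    by (subst sum.Sigma) (auto simp: case_prod_beta)
  also have "\<dots> = (\<Sum>y\<in>UNIV. \<Sum>x\<in>{x. x \<in> ?D \<and> ?g x = y}. h (t (fst x)) (t (snd x)))"
    by (rule sum.group[symmetric]) auto
  also have "\<dots> = (\<Sum>y\<in>UNIV. real (npairs (cnt M t) (fst y) (snd y)) * h (fst y) (snd y))"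
  proof (rule sum.cong[OF refl])
    fix y :: "'v \<times> 'v"
    obtain a b where y: "y = (a, b)" by (cases y)
    have "(\<Sum>x\<in>{x. x \<in> ?D \<and> ?g x = y}. h (t (fst x)) (t (snd x))) = (\<Sum>x\<in>{x. x \<in> ?D \<and> ?g x = y}. h a b)"
      by (rule sum.cong) (auto simp: y)
    then show "(\<Sum>x\<in>{x. x \<in> ?D \<and> ?g x = y}. h (t (fst x)) (t (snd x))) = real (npairs (cnt M t) (fst y) (snd y)) * h (fst y) (snd y)"
      using card_distinct_pairs_of_types[of M t a b] by (simp add: y)
  qed
  also have "\<dots> = (\<Sum>a\<in>UNIV. \<Sum>b\<in>UNIV. real (npairs (cnt M t) a b) * h a b)"
    by (subst sum.cartesian_product) (simp add: UNIV_Times_UNIV[symmetric] case_prod_beta del: UNIV_Times_UNIV)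
  finally show ?thesis .
qed

subsection \<open>Reversing a reaction on count vectors\<close>

lemma npairs_move_pos:
  assumes "0 < npairs n v w" shows "0 < npairs (move n v w v' w') v' w'"
proof -
  have "int (n u) - of_bool (v = u) - of_bool (w = u) \<ge> 0" for u
    using assms by (cases "v = w") (auto simp: npairs_pos_iff)
  then have "int (move n v w v' w' v') \<ge> 1 + of_bool (w' = v')" "int (move n v w v' w' w') \<ge> 1"
    using int_move[OF assms, of v' w' v'] int_move[OF assms, of v' w' w'] by force+
  then show ?thesis by (cases "v' = w'") (simp_all add: npairs_pos_iff)
qed

lemma move_move:
  assumes "0 < npairs n v w" shows "move (move n v w v' w') v' w' v w = n"
proof
  fix u
  have "int (move (move n v w v' w') v' w' v w u) = int (n u)"
    using int_move[OF npairs_move_pos[OF assms, of v' w'], of v w u] int_move[OF assms, of v' w' u] by simp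
  then show "move (move n v w v' w') v' w' v w u = n u" by simp
qed

lemma sum_move:
  fixes n :: "'v::finite \<Rightarrow> nat"
  assumes "0 < npairs n v w" shows "(\<Sum>u\<in>UNIV. move n v w v' w' u) = (\<Sum>u\<in>UNIV. n u)"
proof -
  have "int (\<Sum>u\<in>UNIV. move n v w v' w' u) = (\<Sum>u\<in>UNIV. int (move n v w v' w' u))" by simp
  also have "\<dots> = (\<Sum>u\<in>UNIV. int (n u) - of_bool (v = u) - of_bool (w = u) + of_bool (v' = u) + of_bool (w' = u))"
    using int_move[OF assms] by simp
  also have "\<dots> = (\<Sum>u\<in>UNIV. int (n u))"
    by (simp add: sum.distrib sum_subtractf sum.delta)
  also have "\<dots> = int (\<Sum>u\<in>UNIV. n u)" by simp
  finally show ?thesis by (simp only: of_nat_eq_iff)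
qed

lemma move_in_count_states:
  fixes n :: "'v::finite \<Rightarrow> nat"
  assumes "0 < npairs n v w" "n \<in> count_states M" shows "move n v w v' w' \<in> count_states M"
  using assms sum_move[OF assms(1)] by (simp add: count_states_def)

definition fact_weight :: "('v::finite \<Rightarrow> nat) \<Rightarrow> real" where
  "fact_weight n = (\<Prod>u\<in>UNIV. fact (n u))"

definition remove_pair :: "('v \<Rightarrow> nat) \<Rightarrow> 'v \<Rightarrow> 'v \<Rightarrow> 'v \<Rightarrow> nat" where
  "remove_pair n v w = (\<lambda>u. n u - of_bool (v = u) - of_bool (w = u))"

lemma fact_weight_remove_pair:
  fixes n :: "'v::finite \<Rightarrow> nat"
  assumes pos: "0 < npairs n v w"
  shows "fact_weight n = real (npairs n v w) * fact_weight (remove_pair n v w)"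
proof (cases "v = w")
  case True
  then have "2 \<le> n v" using pos by (simp add: npairs_pos_iff)
  then obtain k where k: "n v = Suc (Suc k)" by (metis add_2_eq_Suc le_Suc_ex)
  have "fact_weight n = fact (n v) * (\<Prod>u\<in>UNIV - {v}. fact (n u))"
    unfolding fact_weight_def by (subst prod.remove[of _ v]) auto
  moreover have "fact_weight (remove_pair n v w) = fact (n v - 2) * (\<Prod>u\<in>UNIV - {v}. fact (n u))"
    unfolding fact_weight_def remove_pair_def using True
    by (subst prod.remove[of _ v]) (auto intro!: prod.cong simp: numeral_2_eq_2)
  moreover have "(fact (n v) :: real) = real (n v * (n v - 1)) * fact (n v - 2)"
    using k by (simp add: algebra_simps)
  ultimately show ?thesis using True by (simp add: npairs_def)
next
  case False
  then have ge: "1 \<le> n v" "1 \<le> n w" using pos by (auto simp: npairs_pos_iff)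
  have split: "(\<Prod>u\<in>UNIV. g u) = g v * (g w * (\<Prod>u\<in>UNIV - {v} - {w}. g u))" for g :: "'v \<Rightarrow> real"
  proof -
    have "(\<Prod>u\<in>UNIV. g u) = g v * (\<Prod>u\<in>UNIV - {v}. g u)" by (rule prod.remove) auto
    moreover have "(\<Prod>u\<in>UNIV - {v}. g u) = g w * (\<Prod>u\<in>UNIV - {v} - {w}. g u)"
      by (rule prod.remove) (use False in auto)
    ultimately show ?thesis by simp
  qed
  have "fact_weight n = fact (n v) * (fact (n w) * (\<Prod>u\<in>UNIV - {v} - {w}. fact (n u)))"
    unfolding fact_weight_def by (rule split)
  moreover have "fact_weight (remove_pair n v w) = fact (n v - 1) * (fact (n w - 1) * (\<Prod>u\<in>UNIV - {v} - {w}. fact (n u)))"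
  proof -
    have "(\<Prod>u\<in>UNIV - {v} - {w}. fact (remove_pair n v w u)) = (\<Prod>u\<in>UNIV - {v} - {w}. (fact (n u) :: real))"
      by (rule prod.cong) (auto simp: remove_pair_def)
    then show ?thesis unfolding fact_weight_def using False by (subst split) (simp add: remove_pair_def)
  qed
  moreover have "(fact (n v) :: real) = real (n v) * fact (n v - 1)" "(fact (n w) :: real) = real (n w) * fact (n w - 1)"
    using ge by (metis One_nat_def Suc_le_D diff_Suc_1 fact_Suc of_nat_Suc mult.commute)+
  ultimately show ?thesis using False unfolding npairs_def by (simp only: if_False of_nat_mult mult_ac)
qed

lemma remove_pair_move:
  assumes "0 < npairs n v w" shows "remove_pair (move n v w v' w') v' w' = remove_pair n v w"
proof
  fix u
  have "int (n u) - of_bool (v = u) - of_bool (w = u) \<ge> 0"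
    using assms by (cases "v = w") (auto simp: npairs_pos_iff)
  moreover have "int (move n v w v' w' u) - of_bool (v' = u) - of_bool (w' = u) \<ge> 0"
    using int_move[OF assms, of v' w' u] calculation by simp
  ultimately show "remove_pair (move n v w v' w') v' w' u = remove_pair n v w u"
    unfolding remove_pair_def using int_move[OF assms, of v' w' u]
    by (cases "v' = u"; cases "w' = u"; cases "v = u"; cases "w = u") auto
qed

text \<open>The only count vector that a reaction \<open>v, w \<rightarrow> v', w'\<close> carries into \<open>n\<close> is the one
  obtained from \<open>n\<close> by the reverse reaction; the factorial weights absorb the pair counts.\<close>
lemma sum_inflow_fact_weight:
  fixes p :: "('v::finite \<Rightarrow> nat) \<Rightarrow> real"
  assumes n: "n \<in> count_states M"
  shows "(\<Sum>m\<in>count_states M. if move m v w v' w' = n then real (npairs m v w) * p m else 0) * fact_weight n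
      = real (npairs n v' w') * p (move n v' w' v w) * fact_weight (move n v' w' v w)"
proof (cases "0 < npairs n v' w'")
  case True
  define m0 where "m0 = move n v' w' v w"
  have pos0: "0 < npairs m0 v w" unfolding m0_def by (rule npairs_move_pos[OF True])
  have "(if move m v w v' w' = n then real (npairs m v w) * p m else 0)
      = (if m = m0 then real (npairs m0 v w) * p m0 else 0)" for m
  proof (cases "0 < npairs m v w")
    case True
    then have "move m v w v' w' = n \<longleftrightarrow> m = m0"
      using move_move[OF True, of v' w'] move_move[OF \<open>0 < npairs n v' w'\<close>, of v w]
      unfolding m0_def by metis
    then show ?thesis by auto
  next
    case False
    then show ?thesis using pos0 by auto
  qed
  then have "(\<Sum>m\<in>count_states M. if move m v w v' w' = n then real (npairs m v w) * p m else 0)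
      = real (npairs m0 v w) * p m0"
    using move_in_count_states[OF True n] by (simp add: m0_def finite_count_states)
  then show ?thesis
    using fact_weight_remove_pair[OF True] fact_weight_remove_pair[OF pos0]
      remove_pair_move[OF True, of v w] by (simp add: m0_def)
next
  case False
  have "(if move m v w v' w' = n then real (npairs m v w) * p m else 0) = 0" for m
    using npairs_move_pos[of m v w v' w'] False by (cases "0 < npairs m v w") auto
  then show ?thesis using False by simp
qed

lemma sum_swap_pairs:
  "(\<Sum>a\<in>A. \<Sum>b\<in>B. \<Sum>c\<in>C. \<Sum>d\<in>D. f a b c d) = (\<Sum>c\<in>C. \<Sum>d\<in>D. \<Sum>a\<in>A. \<Sum>b\<in>B. f a b c d)"
proof -
  have "(\<Sum>a\<in>A. \<Sum>b\<in>B. \<Sum>c\<in>C. \<Sum>d\<in>D. f a b c d) = (\<Sum>a\<in>A. \<Sum>c\<in>C. \<Sum>b\<in>B. \<Sum>d\<in>D. f a b c d)"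
    by (rule sum.cong[OF refl], rule sum.swap)
  also have "\<dots> = (\<Sum>c\<in>C. \<Sum>a\<in>A. \<Sum>b\<in>B. \<Sum>d\<in>D. f a b c d)"
    by (rule sum.swap)
  also have "\<dots> = (\<Sum>c\<in>C. \<Sum>a\<in>A. \<Sum>d\<in>D. \<Sum>b\<in>B. f a b c d)"
    by (rule sum.cong[OF refl], rule sum.cong[OF refl], rule sum.swap)
  also have "\<dots> = (\<Sum>c\<in>C. \<Sum>d\<in>D. \<Sum>a\<in>A. \<Sum>b\<in>B. f a b c d)"
    by (rule sum.cong[OF refl], rule sum.swap)
  finally show ?thesis .
qed

lemma sum_swap_outer:
  "(\<Sum>m\<in>A. \<Sum>a\<in>B. \<Sum>b\<in>C. \<Sum>c\<in>D. \<Sum>d\<in>E. f m a b c d)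
    = (\<Sum>a\<in>B. \<Sum>b\<in>C. \<Sum>c\<in>D. \<Sum>d\<in>E. \<Sum>m\<in>A. f m a b c d)"
proof -
  have "(\<Sum>m\<in>A. \<Sum>a\<in>B. \<Sum>b\<in>C. \<Sum>c\<in>D. \<Sum>d\<in>E. f m a b c d)
      = (\<Sum>a\<in>B. \<Sum>m\<in>A. \<Sum>b\<in>C. \<Sum>c\<in>D. \<Sum>d\<in>E. f m a b c d)"
    by (rule sum.swap)
  also have "\<dots> = (\<Sum>a\<in>B. \<Sum>b\<in>C. \<Sum>m\<in>A. \<Sum>c\<in>D. \<Sum>d\<in>E. f m a b c d)"
    by (intro sum.cong refl) (rule sum.swap)
  also have "\<dots> = (\<Sum>a\<in>B. \<Sum>b\<in>C. \<Sum>c\<in>D. \<Sum>m\<in>A. \<Sum>d\<in>E. f m a b c d)"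
    by (intro sum.cong refl) (rule sum.swap)
  also have "\<dots> = (\<Sum>a\<in>B. \<Sum>b\<in>C. \<Sum>c\<in>D. \<Sum>d\<in>E. \<Sum>m\<in>A. f m a b c d)"
    by (intro sum.cong refl) (rule sum.swap)
  finally show ?thesis .
qed

lemma sum_count_rate_out:
  fixes n :: "'v::finite \<Rightarrow> nat"
  assumes n: "n \<in> count_states M"
  shows "(\<Sum>m\<in>count_states M. count_rate r n m)
      = (\<Sum>v\<in>UNIV. \<Sum>w\<in>UNIV. real (npairs n v w) * (\<Sum>v'\<in>UNIV. \<Sum>w'\<in>UNIV. r v w v' w'))"
proof -
  have "(\<Sum>m\<in>count_states M. count_rate r n m) = (\<Sum>v\<in>UNIV. \<Sum>w\<in>UNIV. \<Sum>v'\<in>UNIV. \<Sum>w'\<in>UNIV.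
      \<Sum>m\<in>count_states M. if move n v w v' w' = m then real (npairs n v w) * r v w v' w' else 0)"
    unfolding count_rate_def by (rule sum_swap_outer)
  also have "\<dots> = (\<Sum>v\<in>UNIV. \<Sum>w\<in>UNIV. \<Sum>v'\<in>UNIV. \<Sum>w'\<in>UNIV. real (npairs n v w) * r v w v' w')"
  proof (intro sum.cong refl)
    fix v w v' w'
    show "(\<Sum>m\<in>count_states M. if move n v w v' w' = m then real (npairs n v w) * r v w v' w' else 0)
        = real (npairs n v w) * r v w v' w'"
    proof (cases "0 < npairs n v w")
      case True
      then show ?thesis using move_in_count_states[OF True n] by (simp add: sum.delta'[OF finite_count_states])
    next
      case False
      then show ?thesis by (simp add: sum.neutral)
    qed
  qed
  finally show ?thesis by (simp add: sum_distrib_left)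
qed

subsection \<open>Global balance for labelled types\<close>

text \<open>Given the counts \<open>n\<close>, the labels are uniform over the \<open>M! / (\<Prod>v. n v!)\<close> type
  assignments with these counts.\<close>
definition type_prob :: "(('v::finite \<Rightarrow> nat) \<Rightarrow> real) \<Rightarrow> nat \<Rightarrow> (nat \<Rightarrow> 'v) \<Rightarrow> real" where
  "type_prob p M t = p (cnt M t) * (\<Prod>v\<in>UNIV. fact (cnt M t v)) / fact M"

definition type_inflow ::
    "('v::finite \<Rightarrow> 'v \<Rightarrow> 'v \<Rightarrow> 'v \<Rightarrow> real) \<Rightarrow> (('v \<Rightarrow> nat) \<Rightarrow> real) \<Rightarrow> nat \<Rightarrow> (nat \<Rightarrow> 'v) \<Rightarrow> real" where
  "type_inflow r p M t =
     (\<Sum>i<M. \<Sum>j\<in>{..<M} - {i}. \<Sum>v\<in>UNIV. \<Sum>w\<in>UNIV. type_prob p M (t(i := v, j := w)) * r v w (t i) (t j))"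

definition type_out_rate :: "('v::finite \<Rightarrow> 'v \<Rightarrow> 'v \<Rightarrow> 'v \<Rightarrow> real) \<Rightarrow> nat \<Rightarrow> (nat \<Rightarrow> 'v) \<Rightarrow> real" where
  "type_out_rate r M t = (\<Sum>i<M. \<Sum>j\<in>{..<M} - {i}. \<Sum>v'\<in>UNIV. \<Sum>w'\<in>UNIV. r (t i) (t j) v' w')"

lemma type_prob_nonneg:
  assumes "stationary_counts r M p" shows "0 \<le> type_prob p M t"
  using assms unfolding type_prob_def stationary_counts_def
  by (intro divide_nonneg_nonneg mult_nonneg_nonneg prod_nonneg) auto

lemma type_out_rate_nonneg:
  assumes "\<And>v w v' w'. 0 \<le> r v w v' w'" shows "0 \<le> type_out_rate r M t"
  unfolding type_out_rate_def by (intro sum_nonneg assms)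

text \<open>Grouping the ordered pairs of molecules by their types and reversing each reaction turns
  the inflow of a labelled assignment into the inflow of the count chain, so global balance of
  \<open>p\<close> gives balance of the exchangeable labelled law.\<close>
lemma type_balance:
  assumes stat: "stationary_counts r M p"
  shows "type_inflow r p M t = type_prob p M t * type_out_rate r M t"
proof -
  define n where "n = cnt M t"
  have n: "n \<in> count_states M" unfolding n_def by (rule cnt_in_count_states)
  define H where "H v' w' = (\<Sum>v\<in>UNIV. \<Sum>w\<in>UNIV.
      p (move n v' w' v w) * fact_weight (move n v' w' v w) / fact M * r v w v' w')" for v' w'
  define R where "R v w = (\<Sum>v'\<in>UNIV. \<Sum>w'\<in>UNIV. r v w v' w')" for v w
  let ?inflow = "\<lambda>v w v' w'. \<Sum>m\<in>count_states M. if move m v w v' w' = n then real (npairs m v w) * p m else 0"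
  have "type_inflow r p M t = (\<Sum>i<M. \<Sum>j\<in>{..<M} - {i}. H (t i) (t j))"
    unfolding type_inflow_def H_def
  proof (intro sum.cong refl)
    fix i j v w
    assume "i \<in> {..<M}" "j \<in> {..<M} - {i}"
    then show "type_prob p M (t(i := v, j := w)) * r v w (t i) (t j)
        = p (move n (t i) (t j) v w) * fact_weight (move n (t i) (t j) v w) / fact M * r v w (t i) (t j)"
      using cnt_fun_upd_pair[of i M j t v w] by (simp add: type_prob_def fact_weight_def n_def)
  qed
  also have "\<dots> = (\<Sum>v'\<in>UNIV. \<Sum>w'\<in>UNIV. real (npairs n v' w') * H v' w')"
    unfolding n_def by (rule sum_distinct_pairs_by_types)
  finally have inflow: "type_inflow r p M t = (\<Sum>v'\<in>UNIV. \<Sum>w'\<in>UNIV. real (npairs n v' w') * H v' w')" .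
  have "(\<Sum>v'\<in>UNIV. \<Sum>w'\<in>UNIV. real (npairs n v' w') * H v' w') * fact M
      = (\<Sum>v'\<in>UNIV. \<Sum>w'\<in>UNIV. \<Sum>v\<in>UNIV. \<Sum>w\<in>UNIV.
          r v w v' w' * (real (npairs n v' w') * p (move n v' w' v w) * fact_weight (move n v' w' v w)))"
    unfolding H_def by (simp add: sum_distrib_left sum_distrib_right field_simps)
  also have "\<dots> = (\<Sum>v'\<in>UNIV. \<Sum>w'\<in>UNIV. \<Sum>v\<in>UNIV. \<Sum>w\<in>UNIV. r v w v' w' * (?inflow v w v' w' * fact_weight n))"
    using sum_inflow_fact_weight[OF n] by simp
  also have "\<dots> = (\<Sum>v\<in>UNIV. \<Sum>w\<in>UNIV. \<Sum>v'\<in>UNIV. \<Sum>w'\<in>UNIV. r v w v' w' * (?inflow v w v' w' * fact_weight n))"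
    by (rule sum_swap_pairs)
  also have "\<dots> = fact_weight n * (\<Sum>v\<in>UNIV. \<Sum>w\<in>UNIV. \<Sum>v'\<in>UNIV. \<Sum>w'\<in>UNIV. \<Sum>m\<in>count_states M.
      p m * (if move m v w v' w' = n then real (npairs m v w) * r v w v' w' else 0))"
    by (simp add: sum_distrib_left sum_distrib_right mult_ac if_distrib cong: if_cong)
  also have "\<dots> = fact_weight n * (\<Sum>m\<in>count_states M. p m * count_rate r m n)"
    unfolding count_rate_def sum_distrib_left[of "p _"] by (rule arg_cong[OF sum_swap_outer[symmetric]])
  also have "\<dots> = fact_weight n * (p n * (\<Sum>m\<in>count_states M. count_rate r n m))"
    using stat n unfolding stationary_counts_def by (simp add: mult_ac)
  also have "\<dots> = fact_weight n * p n * (\<Sum>v\<in>UNIV. \<Sum>w\<in>UNIV. real (npairs n v w) * R v w)"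
    unfolding sum_count_rate_out[OF n] R_def by simp
  also have "(\<Sum>v\<in>UNIV. \<Sum>w\<in>UNIV. real (npairs n v w) * R v w) = type_out_rate r M t"
    unfolding type_out_rate_def R_def n_def by (rule sum_distinct_pairs_by_types[symmetric])
  finally show ?thesis
    unfolding inflow type_prob_def n_def fact_weight_def by (simp add: field_simps)
qed

subsection \<open>Energy densities and the canonical kernel\<close>

locale energy_densities =
  fixes \<rho> :: "'v \<Rightarrow> real \<Rightarrow> real"
  assumes dens_meas: "\<And>v. \<rho> v \<in> borel_measurable lborel"
    and dens_nonneg: "\<And>v x. 0 \<le> \<rho> v x"
    and dens_supp: "\<And>v x. x < 0 \<Longrightarrow> \<rho> v x = 0"
    and dens_prob: "\<And>v. (\<integral>\<^sup>+ x. ennreal (\<rho> v x) \<partial>lborel) = 1"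
begin

lemma rho_borel[measurable]: "\<rho> v \<in> borel_measurable borel"
  using dens_meas[of v] by simp

lemma conv_integrand_indicator: "indicator {0..T} x * \<rho> v x * \<rho> w (T - x) = \<rho> v x * \<rho> w (T - x)"
  by (cases "0 \<le> x"; cases "x \<le> T") (auto simp: dens_supp)

lemma conv_eq_nn_integral: "conv \<rho> v w T = (\<integral>\<^sup>+ x. ennreal (\<rho> v x * \<rho> w (T - x)) \<partial>lborel)"
  unfolding conv_def conv_integrand_indicator ..

lemma conv_neg: "T < 0 \<Longrightarrow> conv \<rho> v w T = 0"
  unfolding conv_def by simp

lemma borel_measurable_conv[measurable]: "(\<lambda>T. conv \<rho> v w T) \<in> borel_measurable borel"
  unfolding conv_eq_nn_integral by measurable

lemma nn_integral_pair_conv: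
  assumes [measurable]: "\<Psi> \<in> borel_measurable borel"
  shows "(\<integral>\<^sup>+ eb. \<integral>\<^sup>+ ea. ennreal (\<rho> v ea * \<rho> w eb) * \<Psi> (ea + eb) \<partial>lborel \<partial>lborel)
       = (\<integral>\<^sup>+ T. conv \<rho> v w T * \<Psi> T \<partial>lborel)"
proof -
  have "(\<integral>\<^sup>+ eb. \<integral>\<^sup>+ ea. ennreal (\<rho> v ea * \<rho> w eb) * \<Psi> (ea + eb) \<partial>lborel \<partial>lborel)
      = (\<integral>\<^sup>+ ea. \<integral>\<^sup>+ eb. ennreal (\<rho> v ea * \<rho> w eb) * \<Psi> (ea + eb) \<partial>lborel \<partial>lborel)"
    by (rule lborel_pair.Fubini') measurable
  also have "\<dots> = (\<integral>\<^sup>+ ea. \<integral>\<^sup>+ T. ennreal (\<rho> v ea * \<rho> w (T - ea)) * \<Psi> T \<partial>lborel \<partial>lborel)"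
  proof (rule nn_integral_cong)
    fix ea
    have "(\<lambda>T. ennreal (\<rho> v ea * \<rho> w (T - ea)) * \<Psi> T) \<in> borel_measurable borel" by measurable
    from nn_integral_real_affine[OF this, of 1 ea]
    have "(\<integral>\<^sup>+ T. ennreal (\<rho> v ea * \<rho> w (T - ea)) * \<Psi> T \<partial>lborel)
        = (\<integral>\<^sup>+ x. ennreal (\<rho> v ea * \<rho> w x) * \<Psi> (ea + x) \<partial>lborel)" by simp
    then show "(\<integral>\<^sup>+ eb. ennreal (\<rho> v ea * \<rho> w eb) * \<Psi> (ea + eb) \<partial>lborel)
        = (\<integral>\<^sup>+ T. ennreal (\<rho> v ea * \<rho> w (T - ea)) * \<Psi> T \<partial>lborel)" by simp
  qed
  also have "\<dots> = (\<integral>\<^sup>+ T. \<integral>\<^sup>+ ea. ennreal (\<rho> v ea * \<rho> w (T - ea)) * \<Psi> T \<partial>lborel \<partial>lborel)"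
    by (rule lborel_pair.Fubini'[symmetric]) measurable
  also have "\<dots> = (\<integral>\<^sup>+ T. conv \<rho> v w T * \<Psi> T \<partial>lborel)"
    by (rule nn_integral_cong) (simp add: conv_eq_nn_integral nn_integral_multc)
  finally show ?thesis .
qed

lemma nn_integral_conv: "(\<integral>\<^sup>+ T. conv \<rho> v w T \<partial>lborel) = 1"
proof -
  have "(\<integral>\<^sup>+ T. conv \<rho> v w T \<partial>lborel) = (\<integral>\<^sup>+ T. conv \<rho> v w T * 1 \<partial>lborel)" by simp
  also have "\<dots> = (\<integral>\<^sup>+ eb. \<integral>\<^sup>+ ea. ennreal (\<rho> v ea * \<rho> w eb) * 1 \<partial>lborel \<partial>lborel)"
    by (rule nn_integral_pair_conv[symmetric]) simp
  also have "\<dots> = (\<integral>\<^sup>+ eb. ennreal (\<rho> w eb) \<partial>lborel)"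
    by (rule nn_integral_cong)
       (simp add: ennreal_mult dens_nonneg nn_integral_multc dens_prob)
  also have "\<dots> = 1" by (rule dens_prob)
  finally show ?thesis .
qed


lemma emeasure_canon_kernel:
  assumes B[measurable]: "B \<in> sets (lborel \<Otimes>\<^sub>M lborel)"
  shows "emeasure (canon_kernel \<rho> v w T) B =
    (if 0 < conv \<rho> v w T \<and> conv \<rho> v w T < \<infinity>
     then (\<integral>\<^sup>+ x. ennreal (\<rho> v x * \<rho> w (T - x)) * indicator B (x, T - x) \<partial>lborel) / conv \<rho> v w T
     else indicator B (T / 2, T / 2))"
proof (cases "0 < conv \<rho> v w T \<and> conv \<rho> v w T < \<infinity>")
  case True
  let ?h = "\<lambda>x. ennreal (indicator {0..T} x * \<rho> v x * \<rho> w (T - x)) / conv \<rho> v w T"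
  have hm[measurable]: "?h \<in> borel_measurable lborel" by measurable
  have phi: "(\<lambda>x. (x, T - x)) \<in> measurable (density lborel ?h) (lborel \<Otimes>\<^sub>M lborel)"
    by (subst measurable_cong_sets[OF sets_density refl]) measurable
  have "emeasure (canon_kernel \<rho> v w T) B = emeasure (distr (density lborel ?h) (lborel \<Otimes>\<^sub>M lborel) (\<lambda>x. (x, T - x))) B"
    using True by (simp add: canon_kernel_def)
  also have "\<dots> = emeasure (density lborel ?h) ((\<lambda>x. (x, T - x)) -` B \<inter> space (density lborel ?h))"
    by (rule emeasure_distr[OF phi B])
  also have "\<dots> = (\<integral>\<^sup>+ x. ?h x * indicator ((\<lambda>x. (x, T - x)) -` B) x \<partial>lborel)"
  proof -
    have pm: "(\<lambda>x. (x, T - x)) \<in> measurable lborel (lborel \<Otimes>\<^sub>M lborel)" by measurable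
    have "(\<lambda>x. (x, T - x)) -` B \<in> sets lborel" using measurable_sets[OF pm B] by simp
    from emeasure_density[OF hm this] show ?thesis by simp
  qed
  also have "\<dots> = (\<integral>\<^sup>+ x. ennreal (\<rho> v x * \<rho> w (T - x)) * indicator B (x, T - x) / conv \<rho> v w T \<partial>lborel)"
  proof (rule nn_integral_cong)
    fix x
    have "?h x = ennreal (\<rho> v x * \<rho> w (T - x)) / conv \<rho> v w T" by (simp only: conv_integrand_indicator)
    moreover have "indicator ((\<lambda>x. (x, T - x)) -` B) x = (indicator B (x, T - x) :: ennreal)"
      by (simp split: split_indicator)
    ultimately show "?h x * indicator ((\<lambda>x. (x, T - x)) -` B) x = ennreal (\<rho> v x * \<rho> w (T - x)) * indicator B (x, T - x) / conv \<rho> v w T"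
      by (simp only: ennreal_divide_times ennreal_times_divide)
  qed
  also have "\<dots> = (\<integral>\<^sup>+ x. ennreal (\<rho> v x * \<rho> w (T - x)) * indicator B (x, T - x) \<partial>lborel) / conv \<rho> v w T"
    by (rule nn_integral_divide) measurable
  finally show ?thesis using True by simp
next
  case False
  have eq: "canon_kernel \<rho> v w T = return (lborel \<Otimes>\<^sub>M lborel) (T / 2, T / 2)"
    unfolding canon_kernel_def by (rule if_not_P[OF False])
  show ?thesis unfolding eq if_not_P[OF False] using B by (simp add: emeasure_return)
qed

lemma sets_canon_kernel: "sets (canon_kernel \<rho> v w T) = sets (lborel \<Otimes>\<^sub>M lborel)"
  by (simp add: canon_kernel_def)

lemma prob_space_canon_kernel: "prob_space (canon_kernel \<rho> v w T)"
proof (cases "0 < conv \<rho> v w T \<and> conv \<rho> v w T < \<infinity>")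
  case True
  have sp: "space (canon_kernel \<rho> v w T) = space (lborel \<Otimes>\<^sub>M lborel)"
    using sets_canon_kernel by (rule sets_eq_imp_space_eq)
  have U: "UNIV \<in> sets (lborel \<Otimes>\<^sub>M lborel)"
    using sets.top[of "lborel \<Otimes>\<^sub>M lborel"] by (simp add: space_pair_measure)
  have "emeasure (canon_kernel \<rho> v w T) (space (canon_kernel \<rho> v w T)) = 1"
    unfolding sp using True U
    by (subst emeasure_canon_kernel) (auto simp: space_pair_measure conv_eq_nn_integral[symmetric] ennreal_divide_self)
  then show ?thesis by (rule prob_spaceI)
next
  case False
  have eq: "canon_kernel \<rho> v w T = return (lborel \<Otimes>\<^sub>M lborel) (T / 2, T / 2)"
    unfolding canon_kernel_def by (rule if_not_P[OF False])
  show ?thesis unfolding eq by (simp add: prob_space_return space_pair_measure)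
qed

lemma measurable_canon_kernel[measurable]: "(\<lambda>T. canon_kernel \<rho> v w T) \<in> measurable borel (subprob_algebra (lborel \<Otimes>\<^sub>M lborel))"
proof (rule measurable_subprob_algebra)
  fix T show "subprob_space (canon_kernel \<rho> v w T)"
    using prob_space_canon_kernel prob_space_imp_subprob_space by blast
  show "sets (canon_kernel \<rho> v w T) = sets (lborel \<Otimes>\<^sub>M lborel)" by (rule sets_canon_kernel)
next
  fix B :: "(real \<times> real) set" assume B[measurable]: "B \<in> sets (lborel \<Otimes>\<^sub>M lborel)"
  show "(\<lambda>T. emeasure (canon_kernel \<rho> v w T) B) \<in> borel_measurable borel"
    unfolding emeasure_canon_kernel[OF B] by measurable
qed


lemma conv_mult_emeasure_canon_kernel:
  assumes B[measurable]: "B \<in> sets (lborel \<Otimes>\<^sub>M lborel)" and fin: "conv \<rho> v w T \<noteq> \<infinity>"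
  shows "conv \<rho> v w T * emeasure (canon_kernel \<rho> v w T) B
    = (\<integral>\<^sup>+ x. ennreal (\<rho> v x * \<rho> w (T - x)) * indicator B (x, T - x) \<partial>lborel)"
proof (cases "conv \<rho> v w T = 0")
  case True
  have "(\<integral>\<^sup>+ x. ennreal (\<rho> v x * \<rho> w (T - x)) * indicator B (x, T - x) \<partial>lborel)
      \<le> (\<integral>\<^sup>+ x. ennreal (\<rho> v x * \<rho> w (T - x)) \<partial>lborel)"
    by (intro nn_integral_mono) (simp split: split_indicator)
  then show ?thesis using True by (simp add: conv_eq_nn_integral)
next
  case False
  then have "0 < conv \<rho> v w T \<and> conv \<rho> v w T < \<infinity>"
    using fin by (simp add: top.not_eq_extremum zero_less_iff_neq_zero)
  then show ?thesis using False fin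
    by (simp add: emeasure_canon_kernel[OF B] ennreal_times_divide ennreal_mult_divide_eq
        mult.commute[of "conv \<rho> v w T"])
qed

text \<open>Redrawing the energies of a pair with independent energies of densities \<open>\<rho> v, \<rho> w\<close>
  from the canonical kernel of \<open>\<rho> v', \<rho> w'\<close> at their total yields independent energies of
  densities \<open>\<rho> v', \<rho> w'\<close>, because both pairs give their total the same density.\<close>
lemma nn_integral_canon_kernel_pair:
  assumes conv_eq: "\<And>T. 0 \<le> T \<Longrightarrow> conv \<rho> v w T = conv \<rho> v' w' T"
    and B[measurable]: "B \<in> sets (lborel \<Otimes>\<^sub>M lborel)"
  shows "(\<integral>\<^sup>+ eb. \<integral>\<^sup>+ ea. ennreal (\<rho> v ea * \<rho> w eb) * emeasure (canon_kernel \<rho> v' w' (ea + eb)) B \<partial>lborel \<partial>lborel)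
       = (\<integral>\<^sup>+ eb. \<integral>\<^sup>+ ea. ennreal (\<rho> v' ea * \<rho> w' eb) * indicator B (ea, eb) \<partial>lborel \<partial>lborel)"
proof -
  have [measurable]: "(\<lambda>T. emeasure (canon_kernel \<rho> v' w' T) B) \<in> borel_measurable borel"
    using measurable_compose[OF measurable_canon_kernel measurable_emeasure_subprob_algebra[OF B]] .
  have "(\<integral>\<^sup>+ eb. \<integral>\<^sup>+ ea. ennreal (\<rho> v ea * \<rho> w eb) * emeasure (canon_kernel \<rho> v' w' (ea + eb)) B \<partial>lborel \<partial>lborel)
      = (\<integral>\<^sup>+ T. conv \<rho> v w T * emeasure (canon_kernel \<rho> v' w' T) B \<partial>lborel)"
    by (rule nn_integral_pair_conv) measurable
  also have "\<dots> = (\<integral>\<^sup>+ T. conv \<rho> v' w' T * emeasure (canon_kernel \<rho> v' w' T) B \<partial>lborel)"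
    by (intro nn_integral_cong) (metis conv_eq conv_neg not_le)
  also have "\<dots> = (\<integral>\<^sup>+ T. \<integral>\<^sup>+ x. ennreal (\<rho> v' x * \<rho> w' (T - x)) * indicator B (x, T - x) \<partial>lborel \<partial>lborel)"
  proof (rule nn_integral_cong_AE)
    have "AE T in lborel. conv \<rho> v' w' T \<noteq> \<infinity>"
      by (rule nn_integral_PInf_AE) (simp_all add: nn_integral_conv)
    then show "AE T in lborel. conv \<rho> v' w' T * emeasure (canon_kernel \<rho> v' w' T) B
        = (\<integral>\<^sup>+ x. ennreal (\<rho> v' x * \<rho> w' (T - x)) * indicator B (x, T - x) \<partial>lborel)"
      by eventually_elim (rule conv_mult_emeasure_canon_kernel[OF B])
  qed
  also have "\<dots> = (\<integral>\<^sup>+ x. \<integral>\<^sup>+ T. ennreal (\<rho> v' x * \<rho> w' (T - x)) * indicator B (x, T - x) \<partial>lborel \<partial>lborel)"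
    by (rule lborel_pair.Fubini') measurable
  also have "\<dots> = (\<integral>\<^sup>+ x. \<integral>\<^sup>+ t. ennreal (\<rho> v' x * \<rho> w' t) * indicator B (x, t) \<partial>lborel \<partial>lborel)"
  proof (rule nn_integral_cong)
    fix x
    have "(\<lambda>T. ennreal (\<rho> v' x * \<rho> w' (T - x)) * indicator B (x, T - x)) \<in> borel_measurable borel"
      by measurable
    from nn_integral_real_affine[OF this, of 1 x]
    show "(\<integral>\<^sup>+ T. ennreal (\<rho> v' x * \<rho> w' (T - x)) * indicator B (x, T - x) \<partial>lborel)
        = (\<integral>\<^sup>+ t. ennreal (\<rho> v' x * \<rho> w' t) * indicator B (x, t) \<partial>lborel)" by simp
  qed
  also have "\<dots> = (\<integral>\<^sup>+ eb. \<integral>\<^sup>+ ea. ennreal (\<rho> v' ea * \<rho> w' eb) * indicator B (ea, eb) \<partial>lborel \<partial>lborel)"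
    by (rule lborel_pair.Fubini'[symmetric]) measurable
  finally show ?thesis .
qed

end

subsection \<open>The state space\<close>

abbreviation mol_space :: "('v \<times> real) measure" where
  "mol_space \<equiv> count_space UNIV \<Otimes>\<^sub>M lborel"

definition types_of :: "'v state \<Rightarrow> nat \<Rightarrow> 'v" where
  "types_of c = (\<lambda>k. fst (c k))"

lemma sigma_finite_mol_space: "sigma_finite_measure (mol_space :: ('v::finite \<times> real) measure)"
  by (intro sigma_finite_pair_measure sigma_finite_measure_count_space_finite
      lborel.sigma_finite_measure_axioms) simp

lemma nn_integral_mol_space:
  fixes h :: "'v::finite \<times> real \<Rightarrow> ennreal"
  assumes [measurable]: "h \<in> borel_measurable mol_space"
  shows "integral\<^sup>N mol_space h = (\<Sum>v\<in>UNIV. \<integral>\<^sup>+ e. h (v, e) \<partial>lborel)"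
proof -
  have "integral\<^sup>N mol_space h = (\<integral>\<^sup>+ v. \<integral>\<^sup>+ e. h (v, e) \<partial>lborel \<partial>count_space UNIV)"
    by (rule lborel.nn_integral_fst[symmetric]) simp
  also have "\<dots> = (\<Sum>v\<in>UNIV. \<integral>\<^sup>+ e. h (v, e) \<partial>lborel)"
    by (rule nn_integral_count_space_finite) simp
  finally show ?thesis .
qed

lemma measurable_mol_space:
  fixes h :: "'v::finite \<times> real \<Rightarrow> 'b"
  assumes "\<And>v. (\<lambda>e. h (v, e)) \<in> measurable borel N"
  shows "h \<in> measurable mol_space N"
  by (rule measurable_pair_measure_countable1) (use assms in simp_all)

lemma measurable_fun_upd_PiM:
  assumes "f \<in> measurable L (PiM I N)" "g \<in> measurable L (N i)"
  shows "(\<lambda>z. (f z)(i := g z)) \<in> measurable L (PiM (insert i I) N)"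
  using measurable_compose[OF measurable_Pair[OF assms] measurable_add_dim] by simp

lemma measurable_types_of:
  fixes g :: "(nat \<Rightarrow> 'v::finite) \<Rightarrow> 'b"
  shows "(\<lambda>c. g (types_of c)) \<in> measurable (state_space M) (count_space UNIV)"
proof -
  define E where "E = {t :: nat \<Rightarrow> 'v. \<forall>k. (k \<in> {..<M} \<longrightarrow> t k \<in> UNIV)
      \<and> (k \<notin> {..<M} \<longrightarrow> t k = fst (undefined :: 'v \<times> real))}"
  have "finite E" unfolding E_def by (rule finite_set_of_finite_funs) auto
  have "types_of \<in> measurable (state_space M) (count_space E)"
  proof (subst measurable_count_space_eq_countable)
    show "countable E" using \<open>finite E\<close> by (rule countable_finite)
    show "types_of \<in> space (state_space M) \<rightarrow> E \<and>
      (\<forall>t\<in>E. types_of -` {t} \<inter> space (state_space M) \<in> sets (state_space M))"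
    proof safe
      fix c :: "'v state"
      assume "c \<in> space (state_space M)"
      then show "types_of c \<in> E"
        by (auto simp: E_def types_of_def state_space_def space_PiM PiE_def extensional_def)
    next
      fix t
      assume t: "t \<in> E"
      have "types_of -` {t} \<inter> space (state_space M) = {c \<in> space (state_space M). \<forall>k\<in>{..<M}. fst (c k) = t k}"
        using t by (auto simp: E_def types_of_def state_space_def space_PiM PiE_def extensional_def fun_eq_iff)
          (metis lessThan_iff)
      also have "\<dots> \<in> sets (state_space M)"
        unfolding state_space_def by measurable
      finally show "types_of -` {t} \<inter> space (state_space M) \<in> sets (state_space M)" .
    qed
  qed
  then show ?thesis by (rule measurable_compose) simp
qed

lemma borel_measurable_types_of:
  fixes g :: "(nat \<Rightarrow> 'v::finite) \<Rightarrow> 'b::topological_space"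
  shows "(\<lambda>c. g (types_of c)) \<in> borel_measurable (state_space M)"
  using measurable_compose[OF measurable_types_of[of g M], of id borel] by simp

lemma (in product_sigma_finite) product_nn_integral_insert2:
  assumes I: "finite I" "i \<notin> I" "j \<notin> I" "i \<noteq> j"
    and f: "f \<in> borel_measurable (PiM (insert i (insert j I)) M)"
  shows "integral\<^sup>N (PiM (insert i (insert j I)) M) f
    = (\<integral>\<^sup>+ x. \<integral>\<^sup>+ b. \<integral>\<^sup>+ a. f (x(j := b, i := a)) \<partial>M i \<partial>M j \<partial>PiM I M)"
proof -
  have "(\<lambda>(y, a). f (y(i := a))) \<in> borel_measurable (PiM (insert j I) M \<Otimes>\<^sub>M M i)"
    using measurable_compose[OF measurable_add_dim f] by (simp add: case_prod_beta)
  then have "(\<lambda>y. \<integral>\<^sup>+ a. f (y(i := a)) \<partial>M i) \<in> borel_measurable (PiM (insert j I) M)"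
    by (rule sigma_finite_measure.borel_measurable_nn_integral[OF sigma_finite_measures])
  then show ?thesis
    using I by (simp add: product_nn_integral_insert[OF _ _ f] product_nn_integral_insert)
qed

lemma nn_integral_state_space_pair:
  fixes H :: "'v::finite state \<Rightarrow> ennreal"
  assumes ij: "i < M" "j < M" "i \<noteq> j" and H: "H \<in> borel_measurable (state_space M)"
  shows "integral\<^sup>N (state_space M) H = (\<integral>\<^sup>+ x. (\<Sum>w\<in>UNIV. \<Sum>v\<in>UNIV.
     \<integral>\<^sup>+ eb. \<integral>\<^sup>+ ea. H (x(j := (w, eb), i := (v, ea))) \<partial>lborel \<partial>lborel) \<partial>PiM ({..<M} - {i, j}) (\<lambda>_. mol_space))"
proof -
  interpret product_sigma_finite "\<lambda>_. mol_space :: ('v \<times> real) measure"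
    unfolding product_sigma_finite_def using sigma_finite_mol_space by simp
  define I where "I = {..<M} - {i, j}"
  have U: "{..<M} = insert i (insert j I)" using ij unfolding I_def by auto
  have I: "finite I" "i \<notin> I" "j \<notin> I" using ij unfolding I_def by auto
  have HI: "H \<in> borel_measurable (PiM (insert i (insert j I)) (\<lambda>_. mol_space))"
    using H unfolding state_space_def U .
  have "integral\<^sup>N (state_space M) H = (\<integral>\<^sup>+ x. \<integral>\<^sup>+ b. \<integral>\<^sup>+ a. H (x(j := b, i := a)) \<partial>mol_space \<partial>mol_space \<partial>PiM I (\<lambda>_. mol_space))"
    unfolding state_space_def U by (rule product_nn_integral_insert2[OF I ij(3) HI])
  also have "\<dots> = (\<integral>\<^sup>+ x. (\<Sum>w\<in>UNIV. \<Sum>v\<in>UNIV.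
     \<integral>\<^sup>+ eb. \<integral>\<^sup>+ ea. H (x(j := (w, eb), i := (v, ea))) \<partial>lborel \<partial>lborel) \<partial>PiM I (\<lambda>_. mol_space))"
  proof (rule nn_integral_cong)
    fix x :: "'v state"
    assume x: "x \<in> space (PiM I (\<lambda>_. mol_space))"
    have upd: "(\<lambda>z. x(j := g z, i := h z)) \<in> measurable L (PiM (insert i (insert j I)) (\<lambda>_. mol_space))"
      if "g \<in> measurable L mol_space" "h \<in> measurable L mol_space" for L g h
      by (intro measurable_fun_upd_PiM that) (use x in simp)
    have "(\<lambda>(b, a). H (x(j := b, i := a))) \<in> borel_measurable (mol_space \<Otimes>\<^sub>M mol_space)"
      using measurable_compose[OF upd[of fst _ snd] HI] by (simp add: case_prod_beta)
    then have m1: "(\<lambda>b. \<integral>\<^sup>+ a. H (x(j := b, i := a)) \<partial>mol_space) \<in> borel_measurable mol_space"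
      by (rule sigma_finite_measure.borel_measurable_nn_integral[OF sigma_finite_mol_space])
    have m2: "(\<lambda>eb. \<integral>\<^sup>+ ea. H (x(j := (w, eb), i := (v, ea))) \<partial>lborel) \<in> borel_measurable lborel" for v w
    proof -
      have "(\<lambda>z :: real \<times> real. x(j := (w, fst z), i := (v, snd z)))
          \<in> measurable (lborel \<Otimes>\<^sub>M lborel) (PiM (insert i (insert j I)) (\<lambda>_. mol_space))"
        by (rule upd) measurable
      from measurable_compose[OF this HI]
      have "(\<lambda>(eb, ea). H (x(j := (w, eb), i := (v, ea)))) \<in> borel_measurable (lborel \<Otimes>\<^sub>M lborel)"
        by (simp add: case_prod_beta)
      then show ?thesis by (rule lborel.borel_measurable_nn_integral)
    qed
    have m3: "(\<lambda>a. H (x(j := b, i := a))) \<in> borel_measurable mol_space" for b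
    proof -
      have "(\<lambda>a. x(j := b, i := a)) \<in> measurable mol_space (PiM (insert i (insert j I)) (\<lambda>_. mol_space))"
        by (rule upd) (simp_all add: space_pair_measure)
      from measurable_compose[OF this HI] show ?thesis .
    qed
    have "(\<integral>\<^sup>+ b. \<integral>\<^sup>+ a. H (x(j := b, i := a)) \<partial>mol_space \<partial>mol_space)
        = (\<Sum>w\<in>UNIV. \<integral>\<^sup>+ eb. \<integral>\<^sup>+ a. H (x(j := (w, eb), i := a)) \<partial>mol_space \<partial>lborel)"
      by (rule nn_integral_mol_space[OF m1])
    also have "\<dots> = (\<Sum>w\<in>UNIV. \<integral>\<^sup>+ eb. (\<Sum>v\<in>UNIV. \<integral>\<^sup>+ ea. H (x(j := (w, eb), i := (v, ea))) \<partial>lborel) \<partial>lborel)"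
      by (intro sum.cong refl nn_integral_cong nn_integral_mol_space m3)
    also have "\<dots> = (\<Sum>w\<in>UNIV. \<Sum>v\<in>UNIV. \<integral>\<^sup>+ eb. \<integral>\<^sup>+ ea. H (x(j := (w, eb), i := (v, ea))) \<partial>lborel \<partial>lborel)"
      by (intro sum.cong refl nn_integral_sum) (use m2 in simp_all)
    finally show "(\<integral>\<^sup>+ b. \<integral>\<^sup>+ a. H (x(j := b, i := a)) \<partial>mol_space \<partial>mol_space)
        = (\<Sum>w\<in>UNIV. \<Sum>v\<in>UNIV. \<integral>\<^sup>+ eb. \<integral>\<^sup>+ ea. H (x(j := (w, eb), i := (v, ea))) \<partial>lborel \<partial>lborel)" .
  qed
  finally show ?thesis unfolding I_def .
qed

definition dens_prod :: "('v \<Rightarrow> real \<Rightarrow> real) \<Rightarrow> nat \<Rightarrow> 'v state \<Rightarrow> real" where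
  "dens_prod \<rho> M c = (\<Prod>k<M. \<rho> (fst (c k)) (snd (c k)))"

definition reaction_section :: "nat \<Rightarrow> nat \<Rightarrow> 'v \<Rightarrow> 'v \<Rightarrow> 'v state set \<Rightarrow> 'v state \<Rightarrow> (real \<times> real) set" where
  "reaction_section i j v' w' A c = {xy \<in> space (lborel \<Otimes>\<^sub>M lborel). c(i := (v', fst xy), j := (w', snd xy)) \<in> A}"

lemma inv_measure_eq_density:
  "inv_measure M \<rho> p = density (state_space M) (\<lambda>c. ennreal (type_prob p M (types_of c) * dens_prod \<rho> M c))"
  by (simp add: inv_measure_def type_prob_def dens_prod_def types_of_def)

lemma out_rate_eq_type_out_rate: "out_rate r M c = type_out_rate r M (types_of c)"
  by (simp add: out_rate_def type_out_rate_def types_of_def)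

lemma jump_rate_eq:
  "jump_rate r \<rho> M c A = (\<Sum>i<M. \<Sum>j\<in>{..<M} - {i}. \<Sum>v'\<in>UNIV. \<Sum>w'\<in>UNIV.
     ennreal (r (fst (c i)) (fst (c j)) v' w') *
     emeasure (canon_kernel \<rho> v' w' (snd (c i) + snd (c j))) (reaction_section i j v' w' A c))"
  unfolding jump_rate_def reaction_section_def ..

lemma measurable_component_state_space: "k < M \<Longrightarrow> (\<lambda>c. c k) \<in> measurable (state_space M) mol_space"
  unfolding state_space_def by (rule measurable_component_singleton) simp

lemma measurable_fun_upd_pair_state_space:
  assumes "i < M" "j < M" "f \<in> measurable L (state_space M)" "g \<in> measurable L mol_space" "h \<in> measurable L mol_space"
  shows "(\<lambda>z. (f z)(i := g z, j := h z)) \<in> measurable L (state_space M)"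
proof -
  have U: "\<And>k. k < M \<Longrightarrow> insert k {..<M} = {..<M}" by auto
  have "(\<lambda>z. (f z)(i := g z)) \<in> measurable L (state_space M)"
    using measurable_fun_upd_PiM[where i = i, OF assms(3)[unfolded state_space_def] assms(4)] U[OF assms(1)]
    unfolding state_space_def by simp
  from measurable_fun_upd_PiM[where i = j, OF this[unfolded state_space_def] assms(5)] U[OF assms(2)]
  show ?thesis unfolding state_space_def by simp
qed

lemma sets_reaction_section:
  assumes ij: "i < M" "j < M" "i \<noteq> j"
    and x: "x \<in> space (PiM ({..<M} - {i, j}) (\<lambda>_. mol_space))" and A: "A \<in> sets (state_space M)"
  shows "reaction_section i j v' w' A x \<in> sets (lborel \<Otimes>\<^sub>M lborel)"
proof -
  let ?I = "{..<M} - {i, j}"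
  have "(\<lambda>z :: real \<times> real. x(i := (v', fst z))) \<in> measurable (lborel \<Otimes>\<^sub>M lborel) (PiM (insert i ?I) (\<lambda>_. mol_space))"
    by (rule measurable_fun_upd_PiM) (use x in simp_all)
  then have "(\<lambda>z :: real \<times> real. x(i := (v', fst z), j := (w', snd z)))
      \<in> measurable (lborel \<Otimes>\<^sub>M lborel) (PiM (insert j (insert i ?I)) (\<lambda>_. mol_space))"
    by (rule measurable_fun_upd_PiM) simp
  moreover have "insert j (insert i ?I) = {..<M}" using ij by auto
  ultimately have "(\<lambda>z :: real \<times> real. x(i := (v', fst z), j := (w', snd z))) \<in> measurable (lborel \<Otimes>\<^sub>M lborel) (state_space M)"
    unfolding state_space_def by simp
  from measurable_sets[OF this A] show ?thesis
    unfolding reaction_section_def by (simp add: vimage_def Int_def conj_commute)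
qed

lemma dens_prod_fun_upd_pair:
  assumes ij: "i < M" "j < M" "i \<noteq> j"
  shows "dens_prod \<rho> M (x(j := (w, eb), i := (v, ea)))
    = \<rho> v ea * \<rho> w eb * (\<Prod>k\<in>{..<M} - {i, j}. \<rho> (fst (x k)) (snd (x k)))"
proof -
  let ?c = "x(j := (w, eb), i := (v, ea))"
  have "dens_prod \<rho> M ?c = \<rho> (fst (?c i)) (snd (?c i)) * (\<Prod>k\<in>{..<M} - {i}. \<rho> (fst (?c k)) (snd (?c k)))"
    unfolding dens_prod_def by (rule prod.remove) (use ij in auto)
  also have "(\<Prod>k\<in>{..<M} - {i}. \<rho> (fst (?c k)) (snd (?c k)))
      = \<rho> (fst (?c j)) (snd (?c j)) * (\<Prod>k\<in>{..<M} - {i} - {j}. \<rho> (fst (?c k)) (snd (?c k)))"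
    by (rule prod.remove) (use ij in auto)
  also have "{..<M} - {i} - {j} = {..<M} - {i, j}" by auto
  also have "(\<Prod>k\<in>{..<M} - {i, j}. \<rho> (fst (?c k)) (snd (?c k))) = (\<Prod>k\<in>{..<M} - {i, j}. \<rho> (fst (x k)) (snd (x k)))"
    by (rule prod.cong) auto
  finally show ?thesis using ij by (simp add: mult.assoc fun_upd_def)
qed

lemma nn_integral_nested_sum:
  fixes f :: "'i \<Rightarrow> 'j \<Rightarrow> 'a \<Rightarrow> 'b \<Rightarrow> 'c \<Rightarrow> ennreal"
  assumes "\<And>i j a b. i \<in> I \<Longrightarrow> j \<in> J i \<Longrightarrow> (\<lambda>c. f i j a b c) \<in> borel_measurable N"
  shows "(\<integral>\<^sup>+ c. (\<Sum>i\<in>I. \<Sum>j\<in>J i. \<Sum>a\<in>A. \<Sum>b\<in>B. f i j a b c) \<partial>N)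
       = (\<Sum>i\<in>I. \<Sum>j\<in>J i. \<Sum>a\<in>A. \<Sum>b\<in>B. \<integral>\<^sup>+ c. f i j a b c \<partial>N)"
  using assms by (simp add: nn_integral_sum borel_measurable_sum)

subsection \<open>Invariance\<close>

locale stationary_reactions = energy_densities \<rho> for \<rho> :: "'v::finite \<Rightarrow> real \<Rightarrow> real" +
  fixes r :: "'v \<Rightarrow> 'v \<Rightarrow> 'v \<Rightarrow> 'v \<Rightarrow> real" and p :: "('v \<Rightarrow> nat) \<Rightarrow> real" and M :: nat
  assumes r_nonneg: "\<And>v w v' w'. 0 \<le> r v w v' w'"
    and conv_eq: "\<And>v w v' w' T. 0 < r v w v' w' \<Longrightarrow> 0 \<le> T \<Longrightarrow> conv \<rho> v w T = conv \<rho> v' w' T"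
    and stat: "stationary_counts r M p"
begin

abbreviation S :: "'v state measure" where "S \<equiv> state_space M"

text \<open>The flow into \<open>A\<close> through the reaction of molecules \<open>i, j\<close> into types \<open>v', w'\<close>,
  as a density in the state before the reaction (\<open>flow_into\<close>) and in the state after it
  (\<open>inflow_density\<close>, restricted to \<open>A\<close> when integrated).\<close>
definition flow_into :: "nat \<Rightarrow> nat \<Rightarrow> 'v \<Rightarrow> 'v \<Rightarrow> 'v state set \<Rightarrow> 'v state \<Rightarrow> ennreal" where
  "flow_into i j v' w' A c = ennreal (type_prob p M (types_of c) * dens_prod \<rho> M c) *
     (ennreal (r (fst (c i)) (fst (c j)) v' w') *
      emeasure (canon_kernel \<rho> v' w' (snd (c i) + snd (c j))) (reaction_section i j v' w' A c))"

definition inflow_density :: "nat \<Rightarrow> nat \<Rightarrow> 'v \<Rightarrow> 'v \<Rightarrow> 'v state \<Rightarrow> ennreal" where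
  "inflow_density i j v' w' c =
     ennreal (dens_prod \<rho> M c * (\<Sum>v\<in>UNIV. \<Sum>w\<in>UNIV. type_prob p M ((types_of c)(i := v, j := w)) * r v w v' w'))
     * indicator {c. fst (c i) = v' \<and> fst (c j) = w'} c"

lemma dens_prod_nonneg: "0 \<le> dens_prod \<rho> M c"
  by (simp add: dens_prod_def prod_nonneg dens_nonneg)

lemma borel_measurable_dens_prod[measurable]: "(\<lambda>c. dens_prod \<rho> M c) \<in> borel_measurable S"
proof -
  have \<rho>: "(\<lambda>a. \<rho> (fst a) (snd a)) \<in> borel_measurable (mol_space :: ('v \<times> real) measure)"
    by (rule measurable_mol_space) simp
  have "(\<lambda>c. \<rho> (fst (c k)) (snd (c k))) \<in> borel_measurable S" if "k < M" for k
    using measurable_compose[OF measurable_component_state_space[OF that] \<rho>] by simp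
  then show ?thesis
    unfolding dens_prod_def by (intro borel_measurable_prod) auto
qed

lemma borel_measurable_energy_component: "k < M \<Longrightarrow> (\<lambda>c. snd (c k)) \<in> borel_measurable S"
  using measurable_compose[OF measurable_component_state_space measurable_snd] by auto

lemma borel_measurable_reaction_kernel:
  assumes ij: "i < M" "j < M" and A: "A \<in> sets S"
  shows "(\<lambda>c. emeasure (canon_kernel \<rho> v' w' (snd (c i) + snd (c j))) (reaction_section i j v' w' A c))
    \<in> borel_measurable S"
proof (rule emeasure_measurable_subprob_algebra2)
  have "(\<lambda>c. snd (c i) + snd (c j)) \<in> borel_measurable S"
    using ij by (intro borel_measurable_add borel_measurable_energy_component)
  then show "(\<lambda>c. canon_kernel \<rho> v' w' (snd (c i) + snd (c j))) \<in> measurable S (subprob_algebra (lborel \<Otimes>\<^sub>M lborel))"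
    using measurable_compose[OF _ measurable_canon_kernel] by blast
  let ?U = "\<lambda>z :: 'v state \<times> (real \<times> real). (fst z)(i := (v', fst (snd z)), j := (w', snd (snd z)))"
  have "?U \<in> measurable (S \<Otimes>\<^sub>M (lborel \<Otimes>\<^sub>M lborel)) S"
    by (rule measurable_fun_upd_pair_state_space[OF ij]) measurable
  from measurable_sets[OF this A]
  show "(SIGMA c:space S. reaction_section i j v' w' A c) \<in> sets (S \<Otimes>\<^sub>M (lborel \<Otimes>\<^sub>M lborel))"
    by (rule back_subst) (auto simp: reaction_section_def space_pair_measure)
qed

lemma borel_measurable_inv_density:
  "(\<lambda>c. ennreal (type_prob p M (types_of c) * dens_prod \<rho> M c)) \<in> borel_measurable S"
  by (intro measurable_compose[OF _ measurable_ennreal] borel_measurable_times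
      borel_measurable_types_of borel_measurable_dens_prod)

lemma borel_measurable_reaction_rate:
  assumes "i < M" "j < M" "A \<in> sets S"
  shows "(\<lambda>c. ennreal (r (fst (c i)) (fst (c j)) v' w') *
      emeasure (canon_kernel \<rho> v' w' (snd (c i) + snd (c j))) (reaction_section i j v' w' A c)) \<in> borel_measurable S"
proof -
  have "(\<lambda>c. r (fst (c i)) (fst (c j)) v' w') \<in> borel_measurable S"
    using borel_measurable_types_of[of "\<lambda>t. r (t i) (t j) v' w'" M] unfolding types_of_def .
  then have "(\<lambda>c. ennreal (r (fst (c i)) (fst (c j)) v' w')) \<in> borel_measurable S"
    by (rule measurable_compose[OF _ measurable_ennreal])
  from borel_measurable_times_ennreal[OF this borel_measurable_reaction_kernel[OF assms]]
  show ?thesis .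
qed

lemma borel_measurable_flow_into:
  assumes "i < M" "j < M" "A \<in> sets S"
  shows "flow_into i j v' w' A \<in> borel_measurable S"
  unfolding flow_into_def
  by (rule borel_measurable_times_ennreal[OF borel_measurable_inv_density borel_measurable_reaction_rate[OF assms]])

lemma borel_measurable_inflow_density: "inflow_density i j v' w' \<in> borel_measurable S"
proof -
  have "(\<lambda>c. \<Sum>v\<in>UNIV. \<Sum>w\<in>UNIV. type_prob p M ((types_of c)(i := v, j := w)) * r v w v' w')
      \<in> borel_measurable S"
    by (rule borel_measurable_types_of[of "\<lambda>t. \<Sum>v\<in>UNIV. \<Sum>w\<in>UNIV. type_prob p M (t(i := v, j := w)) * r v w v' w'"])
  then have "(\<lambda>c. ennreal (dens_prod \<rho> M c * (\<Sum>v\<in>UNIV. \<Sum>w\<in>UNIV. type_prob p M ((types_of c)(i := v, j := w)) * r v w v' w')))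
      \<in> borel_measurable S"
    by (intro measurable_compose[OF _ measurable_ennreal] borel_measurable_times borel_measurable_dens_prod)
  moreover have "(\<lambda>c. of_bool (types_of c i = v' \<and> types_of c j = w') :: ennreal) \<in> borel_measurable S"
    by (rule borel_measurable_types_of[of "\<lambda>t. of_bool (t i = v' \<and> t j = w')"])
  then have "(\<lambda>c. indicator {c. fst (c i) = v' \<and> fst (c j) = w'} c :: ennreal) \<in> borel_measurable S"
    unfolding types_of_def indicator_def by simp
  ultimately show ?thesis
    unfolding inflow_density_def by (rule borel_measurable_times_ennreal)
qed

lemma types_of_fun_upd_pair:
  "i \<noteq> j \<Longrightarrow> types_of (x(j := (w, eb), i := (v, ea))) = (types_of x)(i := v, j := w)"
  by (auto simp: types_of_def fun_eq_iff)

lemma reaction_section_fun_upd_pair: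
  "reaction_section i j v' w' A (x(j := b, i := a)) = reaction_section i j v' w' A x"
proof -
  have "(x(j := b, i := a))(i := u, j := z) = x(i := u, j := z)" for u z
    by (rule ext) simp
  then show ?thesis by (simp add: reaction_section_def)
qed

lemma nn_integral_flow_into_fun_upd:
  assumes ij: "i < M" "j < M" "i \<noteq> j" and A: "A \<in> sets S"
    and x: "x \<in> space (PiM ({..<M} - {i, j}) (\<lambda>_. mol_space))"
  defines "P \<equiv> \<Prod>k\<in>{..<M} - {i, j}. \<rho> (fst (x k)) (snd (x k))"
  shows "(\<integral>\<^sup>+ eb. \<integral>\<^sup>+ ea. flow_into i j v' w' A (x(j := (w, eb), i := (v, ea))) \<partial>lborel \<partial>lborel)
    = ennreal (type_prob p M ((types_of x)(i := v, j := w)) * P * r v w v' w') *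
      (\<integral>\<^sup>+ eb. \<integral>\<^sup>+ ea. ennreal (\<rho> v' ea * \<rho> w' eb) * indicator (reaction_section i j v' w' A x) (ea, eb) \<partial>lborel \<partial>lborel)"
proof -
  let ?B = "reaction_section i j v' w' A x"
  let ?Q = "type_prob p M ((types_of x)(i := v, j := w))"
  have B[measurable]: "?B \<in> sets (lborel \<Otimes>\<^sub>M lborel)"
    by (rule sets_reaction_section[OF ij x A])
  have QP: "0 \<le> ?Q * P"
    unfolding P_def by (intro mult_nonneg_nonneg type_prob_nonneg[OF stat] prod_nonneg) (simp add: dens_nonneg)
  have "flow_into i j v' w' A (x(j := (w, eb), i := (v, ea)))
      = ennreal (?Q * P * r v w v' w') * (ennreal (\<rho> v ea * \<rho> w eb) * emeasure (canon_kernel \<rho> v' w' (ea + eb)) ?B)"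
    for ea eb
  proof -
    have dens: "type_prob p M (types_of (x(j := (w, eb), i := (v, ea)))) * dens_prod \<rho> M (x(j := (w, eb), i := (v, ea)))
        = (?Q * P) * (\<rho> v ea * \<rho> w eb)"
      using ij by (simp add: types_of_fun_upd_pair dens_prod_fun_upd_pair P_def mult_ac)
    have ci: "(x(j := (w, eb), i := (v, ea))) i = (v, ea)" and cj: "(x(j := (w, eb), i := (v, ea))) j = (w, eb)"
      using ij by auto
    show ?thesis
      unfolding flow_into_def ci cj fst_conv snd_conv dens reaction_section_fun_upd_pair
        ennreal_mult[OF QP mult_nonneg_nonneg[OF dens_nonneg dens_nonneg]] ennreal_mult[OF QP r_nonneg]
      by (simp only: mult_ac)
  qed
  then have "(\<integral>\<^sup>+ eb. \<integral>\<^sup>+ ea. flow_into i j v' w' A (x(j := (w, eb), i := (v, ea))) \<partial>lborel \<partial>lborel)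
      = ennreal (?Q * P * r v w v' w') *
        (\<integral>\<^sup>+ eb. \<integral>\<^sup>+ ea. ennreal (\<rho> v ea * \<rho> w eb) * emeasure (canon_kernel \<rho> v' w' (ea + eb)) ?B \<partial>lborel \<partial>lborel)"
    by (simp add: nn_integral_cmult)
  also have "\<dots> = ennreal (?Q * P * r v w v' w') *
      (\<integral>\<^sup>+ eb. \<integral>\<^sup>+ ea. ennreal (\<rho> v' ea * \<rho> w' eb) * indicator ?B (ea, eb) \<partial>lborel \<partial>lborel)"
  proof (cases "r v w v' w' = 0")
    case False
    then have "0 < r v w v' w'" using r_nonneg[of v w v' w'] by simp
    then show ?thesis using nn_integral_canon_kernel_pair[OF conv_eq B] by simp
  qed simp
  finally show ?thesis .
qed

lemma nn_integral_inflow_density_fun_upd: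
  fixes v' w' :: 'v
  assumes ij: "i < M" "j < M" "i \<noteq> j" and A: "A \<in> sets S"
    and x: "x \<in> space (PiM ({..<M} - {i, j}) (\<lambda>_. mol_space))"
  defines "P \<equiv> \<Prod>k\<in>{..<M} - {i, j}. \<rho> (fst (x k)) (snd (x k))"
    and "Y \<equiv> \<Sum>v\<in>UNIV. \<Sum>w\<in>UNIV. type_prob p M ((types_of x)(i := v, j := w)) * r v w v' w'"
  shows "(\<integral>\<^sup>+ eb. \<integral>\<^sup>+ ea. inflow_density i j v' w' (x(j := (w, eb), i := (v, ea))) *
        indicator A (x(j := (w, eb), i := (v, ea))) \<partial>lborel \<partial>lborel)
    = (if v = v' \<and> w = w' then ennreal (P * Y) *
        (\<integral>\<^sup>+ eb. \<integral>\<^sup>+ ea. ennreal (\<rho> v' ea * \<rho> w' eb) * indicator (reaction_section i j v' w' A x) (ea, eb) \<partial>lborel \<partial>lborel)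
       else 0)"
proof (cases "v = v' \<and> w = w'")
  case True
  have PY: "0 \<le> P * Y"
    unfolding P_def Y_def
    by (intro mult_nonneg_nonneg sum_nonneg prod_nonneg type_prob_nonneg[OF stat] r_nonneg) (simp add: dens_nonneg)
  have "inflow_density i j v' w' (x(j := (w', eb), i := (v', ea))) * indicator A (x(j := (w', eb), i := (v', ea)))
      = ennreal (P * Y) * (ennreal (\<rho> v' ea * \<rho> w' eb) * indicator (reaction_section i j v' w' A x) (ea, eb))"
    for ea eb
  proof -
    have dens: "dens_prod \<rho> M (x(j := (w', eb), i := (v', ea))) *
        (\<Sum>v\<in>UNIV. \<Sum>w\<in>UNIV. type_prob p M ((types_of (x(j := (w', eb), i := (v', ea))))(i := v, j := w)) * r v w v' w')
        = (P * Y) * (\<rho> v' ea * \<rho> w' eb)"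
      using ij by (simp add: types_of_fun_upd_pair dens_prod_fun_upd_pair P_def Y_def mult_ac)
    have ind: "indicator A (x(j := (w', eb), i := (v', ea))) = (indicator (reaction_section i j v' w' A x) (ea, eb) :: ennreal)"
      using ij by (simp add: reaction_section_def space_pair_measure fun_upd_twist split: split_indicator)
    have ci: "(x(j := (w', eb), i := (v', ea))) i = (v', ea)" and cj: "(x(j := (w', eb), i := (v', ea))) j = (w', eb)"
      using ij by auto
    show ?thesis
      unfolding inflow_density_def dens ind ennreal_mult[OF PY mult_nonneg_nonneg[OF dens_nonneg dens_nonneg]]
      using ci cj by (simp add: mult_ac)
  qed
  moreover have [measurable]: "reaction_section i j v' w' A x \<in> sets (lborel \<Otimes>\<^sub>M lborel)"
    by (rule sets_reaction_section[OF ij x A])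
  ultimately show ?thesis using True by (simp add: nn_integral_cmult)
next
  case False
  then have "inflow_density i j v' w' (x(j := (w, eb), i := (v, ea))) = 0" for ea eb
    using ij by (auto simp: inflow_density_def)
  with False show ?thesis by (simp del: de_Morgan_conj)
qed

lemma nn_integral_flow_into:
  assumes ij: "i < M" "j < M" "i \<noteq> j" and A[measurable]: "A \<in> sets S"
  shows "(\<integral>\<^sup>+ c. flow_into i j v' w' A c \<partial>S) = (\<integral>\<^sup>+ c. inflow_density i j v' w' c * indicator A c \<partial>S)"
proof -
  let ?I = "{..<M} - {i, j}"
  have inflow_m: "(\<lambda>c. inflow_density i j v' w' c * indicator A c) \<in> borel_measurable S"
    by (intro borel_measurable_times_ennreal borel_measurable_inflow_density) measurable
  have "(\<integral>\<^sup>+ c. flow_into i j v' w' A c \<partial>S) = (\<integral>\<^sup>+ x. (\<Sum>w\<in>UNIV. \<Sum>v\<in>UNIV.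
      \<integral>\<^sup>+ eb. \<integral>\<^sup>+ ea. flow_into i j v' w' A (x(j := (w, eb), i := (v, ea))) \<partial>lborel \<partial>lborel) \<partial>PiM ?I (\<lambda>_. mol_space))"
    by (rule nn_integral_state_space_pair[OF ij borel_measurable_flow_into[OF ij(1,2) A]])
  also have "\<dots> = (\<integral>\<^sup>+ x. (\<Sum>w\<in>UNIV. \<Sum>v\<in>UNIV. \<integral>\<^sup>+ eb. \<integral>\<^sup>+ ea. inflow_density i j v' w' (x(j := (w, eb), i := (v, ea))) *
      indicator A (x(j := (w, eb), i := (v, ea))) \<partial>lborel \<partial>lborel) \<partial>PiM ?I (\<lambda>_. mol_space))"
  proof (rule nn_integral_cong)
    fix x :: "'v state"
    assume x: "x \<in> space (PiM ?I (\<lambda>_. mol_space))"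
    define P where "P = (\<Prod>k\<in>?I. \<rho> (fst (x k)) (snd (x k)))"
    define Q where "Q v w = type_prob p M ((types_of x)(i := v, j := w))" for v w
    define G where "G = (\<integral>\<^sup>+ eb. \<integral>\<^sup>+ ea. ennreal (\<rho> v' ea * \<rho> w' eb) *
      indicator (reaction_section i j v' w' A x) (ea, eb) \<partial>lborel \<partial>lborel)"
    have nonneg: "0 \<le> Q v w * P * r v w v' w'" for v w
      unfolding P_def Q_def
      by (intro mult_nonneg_nonneg type_prob_nonneg[OF stat] prod_nonneg r_nonneg) (simp add: dens_nonneg)
    have "(\<Sum>w\<in>UNIV. \<Sum>v\<in>UNIV. \<integral>\<^sup>+ eb. \<integral>\<^sup>+ ea. flow_into i j v' w' A (x(j := (w, eb), i := (v, ea))) \<partial>lborel \<partial>lborel)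
        = (\<Sum>w\<in>UNIV. \<Sum>v\<in>UNIV. ennreal (Q v w * P * r v w v' w')) * G"
      unfolding nn_integral_flow_into_fun_upd[OF ij A x] P_def Q_def G_def by (simp add: sum_distrib_right)
    also have "\<dots> = ennreal (\<Sum>w\<in>UNIV. \<Sum>v\<in>UNIV. Q v w * P * r v w v' w') * G"
      using nonneg by (simp add: sum_ennreal sum_nonneg)
    also have "(\<Sum>w\<in>UNIV. \<Sum>v\<in>UNIV. Q v w * P * r v w v' w') = P * (\<Sum>v\<in>UNIV. \<Sum>w\<in>UNIV. Q v w * r v w v' w')"
      by (subst sum.swap) (simp add: sum_distrib_left mult_ac)
    also have "ennreal (P * (\<Sum>v\<in>UNIV. \<Sum>w\<in>UNIV. Q v w * r v w v' w')) * G
        = (\<Sum>w\<in>UNIV. \<Sum>v\<in>UNIV. \<integral>\<^sup>+ eb. \<integral>\<^sup>+ ea. inflow_density i j v' w' (x(j := (w, eb), i := (v, ea))) *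
        indicator A (x(j := (w, eb), i := (v, ea))) \<partial>lborel \<partial>lborel)"
    proof -
      have "(\<Sum>v\<in>UNIV. if v = v' \<and> w = w' then X else 0) = (if w = w' then X else 0)" for w and X :: ennreal
        by (cases "w = w'") simp_all
      then show ?thesis
        unfolding nn_integral_inflow_density_fun_upd[OF ij A x] P_def Q_def G_def by simp
    qed
    finally show "(\<Sum>w\<in>UNIV. \<Sum>v\<in>UNIV. \<integral>\<^sup>+ eb. \<integral>\<^sup>+ ea. flow_into i j v' w' A (x(j := (w, eb), i := (v, ea))) \<partial>lborel \<partial>lborel)
        = (\<Sum>w\<in>UNIV. \<Sum>v\<in>UNIV. \<integral>\<^sup>+ eb. \<integral>\<^sup>+ ea. inflow_density i j v' w' (x(j := (w, eb), i := (v, ea))) *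
          indicator A (x(j := (w, eb), i := (v, ea))) \<partial>lborel \<partial>lborel)" .
  qed
  also have "\<dots> = (\<integral>\<^sup>+ c. inflow_density i j v' w' c * indicator A c \<partial>S)"
    by (rule nn_integral_state_space_pair[OF ij inflow_m, symmetric])
  finally show ?thesis .
qed

lemma sum_inflow_density:
  "(\<Sum>i<M. \<Sum>j\<in>{..<M} - {i}. \<Sum>v'\<in>UNIV. \<Sum>w'\<in>UNIV. inflow_density i j v' w' c)
    = ennreal (dens_prod \<rho> M c * type_inflow r p M (types_of c))"
proof -
  define Y where "Y i j v' w' = (\<Sum>v\<in>UNIV. \<Sum>w\<in>UNIV. type_prob p M ((types_of c)(i := v, j := w)) * r v w v' w')"
    for i j v' w'
  have Y: "0 \<le> dens_prod \<rho> M c * Y i j v' w'" for i j v' w'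
    unfolding Y_def by (intro mult_nonneg_nonneg dens_prod_nonneg sum_nonneg type_prob_nonneg[OF stat] r_nonneg)
  have "(\<Sum>v'\<in>UNIV. \<Sum>w'\<in>UNIV. inflow_density i j v' w' c)
      = (\<Sum>v'\<in>UNIV. if v' = fst (c i) then (\<Sum>w'\<in>UNIV. if w' = fst (c j) then ennreal (dens_prod \<rho> M c * Y i j v' w') else 0) else 0)"
    for i j
    unfolding inflow_density_def Y_def by (intro sum.cong refl) (auto split: split_indicator)
  then have "(\<Sum>v'\<in>UNIV. \<Sum>w'\<in>UNIV. inflow_density i j v' w' c) = ennreal (dens_prod \<rho> M c * Y i j (fst (c i)) (fst (c j)))"
    for i j
    by simp
  then have "(\<Sum>i<M. \<Sum>j\<in>{..<M} - {i}. \<Sum>v'\<in>UNIV. \<Sum>w'\<in>UNIV. inflow_density i j v' w' c)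
      = ennreal (\<Sum>i<M. \<Sum>j\<in>{..<M} - {i}. dens_prod \<rho> M c * Y i j (fst (c i)) (fst (c j)))"
    using Y by (simp add: sum_ennreal sum_nonneg)
  also have "(\<Sum>i<M. \<Sum>j\<in>{..<M} - {i}. dens_prod \<rho> M c * Y i j (fst (c i)) (fst (c j)))
      = dens_prod \<rho> M c * type_inflow r p M (types_of c)"
    unfolding type_inflow_def Y_def types_of_def by (simp only: sum_distrib_left)
  finally show ?thesis .
qed

lemma nn_integral_jump_rate:
  assumes A[measurable]: "A \<in> sets S"
  shows "(\<integral>\<^sup>+ c. jump_rate r \<rho> M c A \<partial>inv_measure M \<rho> p)
    = (\<integral>\<^sup>+ c. ennreal (dens_prod \<rho> M c * type_inflow r p M (types_of c)) * indicator A c \<partial>S)"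
proof -
  let ?pairs = "\<lambda>f. \<Sum>i<M. \<Sum>j\<in>{..<M} - {i}. \<Sum>v'\<in>UNIV. \<Sum>w'\<in>UNIV. f i j v' w'"
  have "(\<lambda>c. jump_rate r \<rho> M c A) \<in> borel_measurable S"
    unfolding jump_rate_eq using borel_measurable_reaction_rate[OF _ _ A] by (auto intro!: borel_measurable_sum)
  then have "(\<integral>\<^sup>+ c. jump_rate r \<rho> M c A \<partial>inv_measure M \<rho> p)
      = (\<integral>\<^sup>+ c. ennreal (type_prob p M (types_of c) * dens_prod \<rho> M c) * jump_rate r \<rho> M c A \<partial>S)"
    unfolding inv_measure_eq_density by (rule nn_integral_density[OF borel_measurable_inv_density])
  also have "\<dots> = (\<integral>\<^sup>+ c. ?pairs (\<lambda>i j v' w'. flow_into i j v' w' A c) \<partial>S)"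
    unfolding jump_rate_eq flow_into_def by (simp only: sum_distrib_left)
  also have "\<dots> = ?pairs (\<lambda>i j v' w'. \<integral>\<^sup>+ c. flow_into i j v' w' A c \<partial>S)"
    by (rule nn_integral_nested_sum) (auto intro: borel_measurable_flow_into)
  also have "\<dots> = ?pairs (\<lambda>i j v' w'. \<integral>\<^sup>+ c. inflow_density i j v' w' c * indicator A c \<partial>S)"
    by (intro sum.cong refl nn_integral_flow_into) auto
  also have "\<dots> = (\<integral>\<^sup>+ c. ?pairs (\<lambda>i j v' w'. inflow_density i j v' w' c * indicator A c) \<partial>S)"
    by (rule nn_integral_nested_sum[symmetric])
      (intro borel_measurable_times_ennreal borel_measurable_inflow_density borel_measurable_indicator A)
  also have "\<dots> = (\<integral>\<^sup>+ c. ennreal (dens_prod \<rho> M c * type_inflow r p M (types_of c)) * indicator A c \<partial>S)"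
    by (simp only: sum_distrib_right[symmetric] sum_inflow_density)
  finally show ?thesis .
qed

lemma nn_integral_out_rate:
  assumes A[measurable]: "A \<in> sets S"
  shows "(\<integral>\<^sup>+ c. ennreal (out_rate r M c) * indicator A c \<partial>inv_measure M \<rho> p)
    = (\<integral>\<^sup>+ c. ennreal (dens_prod \<rho> M c * (type_prob p M (types_of c) * type_out_rate r M (types_of c))) * indicator A c \<partial>S)"
proof -
  have "(\<lambda>c. ennreal (out_rate r M c) * indicator A c) \<in> borel_measurable S"
    unfolding out_rate_eq_type_out_rate
    by (intro borel_measurable_times_ennreal borel_measurable_indicator A
        measurable_compose[OF borel_measurable_types_of measurable_ennreal])
  then have "(\<integral>\<^sup>+ c. ennreal (out_rate r M c) * indicator A c \<partial>inv_measure M \<rho> p)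
      = (\<integral>\<^sup>+ c. ennreal (type_prob p M (types_of c) * dens_prod \<rho> M c) * (ennreal (out_rate r M c) * indicator A c) \<partial>S)"
    unfolding inv_measure_eq_density by (rule nn_integral_density[OF borel_measurable_inv_density])
  also have "\<dots> = (\<integral>\<^sup>+ c. ennreal (dens_prod \<rho> M c * (type_prob p M (types_of c) * type_out_rate r M (types_of c))) * indicator A c \<partial>S)"
  proof (rule nn_integral_cong)
    fix c :: "'v state"
    have "ennreal (type_prob p M (types_of c) * dens_prod \<rho> M c) * ennreal (out_rate r M c)
        = ennreal (dens_prod \<rho> M c * (type_prob p M (types_of c) * type_out_rate r M (types_of c)))"
      unfolding out_rate_eq_type_out_rate
      by (subst ennreal_mult[symmetric])
        (simp_all add: type_prob_nonneg[OF stat] dens_prod_nonneg type_out_rate_nonneg[OF r_nonneg] mult_ac)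
    then show "ennreal (type_prob p M (types_of c) * dens_prod \<rho> M c) * (ennreal (out_rate r M c) * indicator A c)
        = ennreal (dens_prod \<rho> M c * (type_prob p M (types_of c) * type_out_rate r M (types_of c))) * indicator A c"
      unfolding mult.assoc[symmetric] by simp
  qed
  finally show ?thesis .
qed

end

theorem theorem7:
  fixes r :: "'v::finite \<Rightarrow> 'v \<Rightarrow> 'v \<Rightarrow> 'v \<Rightarrow> real"
    and \<rho> :: "'v \<Rightarrow> real \<Rightarrow> real"
    and p :: "('v \<Rightarrow> nat) \<Rightarrow> real"
    and M :: nat
  assumes r_nonneg: "\<And>v w v' w'. 0 \<le> r v w v' w'"
    and dens_meas: "\<And>v. \<rho> v \<in> borel_measurable lborel"
    and dens_nonneg: "\<And>v x. 0 \<le> \<rho> v x"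
    and dens_supp: "\<And>v x. x < 0 \<Longrightarrow> \<rho> v x = 0"
    and dens_prob: "\<And>v. (\<integral>\<^sup>+ x. ennreal (\<rho> v x) \<partial>lborel) = 1"
    and conv_eq: "\<And>v w v' w' T. 0 < r v w v' w' \<Longrightarrow> 0 \<le> T \<Longrightarrow> conv \<rho> v w T = conv \<rho> v' w' T"
    and stat: "stationary_counts r M p"
  shows "invariant r \<rho> M (inv_measure M \<rho> p)"
proof -
  interpret stationary_reactions \<rho> r p M
    by unfold_locales (use assms in auto)
  show ?thesis
    unfolding invariant_def
  proof (intro conjI ballI)
    show "sets (inv_measure M \<rho> p) = sets (state_space M)"
      by (simp add: inv_measure_eq_density)
  next
    fix A :: "'v state set"
    assume "A \<in> sets (state_space M)"
    then show "(\<integral>\<^sup>+ c. jump_rate r \<rho> M c A \<partial>inv_measure M \<rho> p)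
        = (\<integral>\<^sup>+ c. ennreal (out_rate r M c) * indicator A c \<partial>inv_measure M \<rho> p)"
      by (simp only: nn_integral_jump_rate nn_integral_out_rate type_balance[OF stat])
  qed
qed

end
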